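(* Let $n\ge3$ and let $$\pi_n=\begin{pmatrix}0&2&3&\cdots&n-1&1&n\\ n&n-1&\cdots&3&2&1&0\end{pmatrix}$$ be the labeled permutation on the alphabet $\{0,1,\dots,n\}$. Then the reduced Rauzy diagram $\mathcal D_r(\pi_n)$ has exactly $2^{n-1}-1+n$ vertices.
   Context: A labeled permutation on an alphabet $\mathcal A$ with $d$ letters is a pair $(\pi_t,\pi_b)$ of bijections $\mathcal A\to\{1,\dots,d\}$, written as a two-row array listing $\pi_t^{-1}(1),\dots,\pi_t^{-1}(d)$ on top and $\pi_b^{-1}(1),\dots,\pi_b^{-1}(d)$ on the bottom. The Rauzy move $\mathcal R_t$ keeps the top row and in the bottom row moves the last letter to the position immediately right of the letter $\pi_t^{-1}(d)$; $\mathcal R_b$ keeps the bottom row and in the top row moves the last letter to immediately right of $\pi_b^{-1}(d)$. Two labeled permutations are identified as reduced permutations if $\pi_b\circ\pi_t^{-1}=\pi_b'\circ\pi_t'^{-1}$. The reduced Rauzy diagram $\mathcal D_r(\pi)$ is the directed graph whose vertices are the reduced permutations obtainable from (the class of) $\pi$ by iterated Rauzy moves, with edges given by the two moves. *)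

theory Defs
  imports Main
begin

text \<open>A labeled permutation on an alphabet of letters of type 'a is represented by its
two rows (top row, bottom row), each a list enumerating the alphabet without repetition:
the top row is [pi_t^-1(1), ..., pi_t^-1(d)], the bottom row [pi_b^-1(1), ..., pi_b^-1(d)].\<close>

type_synonym 'a lperm = "'a list \<times> 'a list"

definition is_lperm :: "'a set \<Rightarrow> 'a lperm \<Rightarrow> bool" where
  "is_lperm A p \<longleftrightarrow> distinct (fst p) \<and> distinct (snd p) \<and> set (fst p) = A \<and> set (snd p) = A"

definition pos :: "'a \<Rightarrow> 'a list \<Rightarrow> nat" where
  "pos a xs = length (takeWhile (\<lambda>z. z \<noteq> a) xs)"

definition move_last_after :: "'a \<Rightarrow> 'a list \<Rightarrow> 'a list" where
  "move_last_after y r =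
     (let x = last r; r' = butlast r in
      if x = y then r else concat (map (\<lambda>z. if z = y then [z, x] else [z]) r'))"

definition rauzy_t :: "'a lperm \<Rightarrow> 'a lperm" where
  "rauzy_t p = (fst p, move_last_after (last (fst p)) (snd p))"

definition rauzy_b :: "'a lperm \<Rightarrow> 'a lperm" where
  "rauzy_b p = (move_last_after (last (snd p)) (fst p), snd p)"

definition rauzy_step :: "'a lperm \<Rightarrow> 'a lperm \<Rightarrow> bool" where
  "rauzy_step p q \<longleftrightarrow> q = rauzy_t p \<or> q = rauzy_b p"

text \<open>The reduced permutation pi_b o pi_t^-1 (written with 0-based positions):
the i-th entry is the bottom position of the i-th letter of the top row.
Two labeled permutations are identified iff these lists coincide.\<close>
definition reduced :: "'a lperm \<Rightarrow> nat list" where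
  "reduced p = map (\<lambda>a. pos a (snd p)) (fst p)"

text \<open>Vertices of the reduced Rauzy diagram: reduced classes of all labeled permutations
obtained from p by iterated Rauzy moves.  (Rauzy moves commute with relabeling, so this
equals the set of reduced permutations reachable from the class of p.)\<close>
definition reduced_rauzy_vertices :: "'a lperm \<Rightarrow> nat list set" where
  "reduced_rauzy_vertices p = reduced ` {q. rauzy_step\<^sup>*\<^sup>* p q}"

definition pi_n :: "nat \<Rightarrow> nat lperm" where
  "pi_n n = (0 # [2..<n] @ [1, n], rev [0..<n+1])"

end

theory Submission
  imports Defs
begin

(* A reduced permutation on d letters is encoded by the list sigma of length d with
   sigma ! i = bottom position of the i-th top letter (see reduced).  The proof has
   four parts.
   1. The Rauzy moves descend to two explicit maps mtop, mbot on such lists, so the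
      vertex set of D_r(p) is the orbit of reduced p under mtop and mbot.
   2. The hyperelliptic class of sym_perm k = [k-1, ..., 1, 0] is described
      recursively: it is the union of two halves P_k and Q_k, built from smaller
      halves by two block insertions eblock and fblock that commute with the moves.
      Both halves have 2^(k-2) elements and meet only in sym_perm k, so the class
      has 2^(k-1) - 1 elements.
   3. reduced (pi_n n) = mark n u0 with u0 = fblock (n-2) [1, 0], where mark h t puts
      a new first entry h in front of the permutation t of {0..<n}.  The orbit of it consists of the lists mark h t
      with t in the hyperelliptic class and h the unique marker of t (the relation
      marked), together with n lists mark n u, u on an explicit rotation cycle.
   4. Counting both families gives 2^(n-1) - 1 + n. *)


lemma pos_Cons: "pos a (x # xs) = (if x = a then 0 else Suc (pos a xs))"
  by (simp add: pos_def)

lemma pos_append: "pos a (xs @ ys) = (if a \<in> set xs then pos a xs else length xs + pos a ys)"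
  by (induction xs) (auto simp: pos_Cons pos_def)

lemma pos_nth: "distinct xs \<Longrightarrow> i < length xs \<Longrightarrow> pos (xs ! i) xs = i"
proof (induction xs arbitrary: i)
  case Nil then show ?case by simp
next
  case (Cons x xs) then show ?case
    by (cases i) (auto simp: pos_Cons nth_mem)
qed

lemma pos_lt: "a \<in> set xs \<Longrightarrow> pos a xs < length xs"
  by (induction xs) (auto simp: pos_Cons)

lemma pos_inj: "a \<in> set xs \<Longrightarrow> b \<in> set xs \<Longrightarrow> pos a xs = pos b xs \<Longrightarrow> a = b"
  by (induction xs) (auto simp: pos_Cons split: if_splits)

lemma pos_last: "distinct B \<Longrightarrow> B \<noteq> [] \<Longrightarrow> pos (last B) B = length B - 1"
  by (metis last_conv_nth diff_less length_greater_0_conv less_numeral_extra(1) pos_nth)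

lemma move_last_after_split:
  assumes "y \<notin> set B1" "y \<notin> set B2" "y \<noteq> z"
  shows "move_last_after y (B1 @ y # B2 @ [z]) = B1 @ y # z # B2"
proof -
  have "butlast (B1 @ y # B2 @ [z]) = B1 @ y # B2"
    by (simp add: butlast_append)
  moreover have id: "y \<notin> set L \<Longrightarrow> concat (map (\<lambda>w. if w = y then [w, z] else [w]) L) = L" for L
    by (induction L) auto
  ultimately show ?thesis using assms
    by (simp add: move_last_after_def Let_def id)
qed

lemma move_last_after_last: "xs \<noteq> [] \<Longrightarrow> move_last_after (last xs) xs = xs"
  by (simp add: move_last_after_def)

lemma move_last_after_append:
  assumes "y \<notin> set A" "B \<noteq> []"
  shows "move_last_after y (A @ B) = A @ move_last_after y B"
proof -
  have id: "concat (map (\<lambda>w. if w = y then [w, z] else [w]) A) = A" for z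
    using assms(1) by (induction A) auto
  show ?thesis using assms id by (simp add: move_last_after_def Let_def butlast_append)
qed

lemma move_target_cases:
  assumes "y \<in> set xs"
  obtains "y = last xs" | B1 B2 where "xs = B1 @ y # B2 @ [last xs]" "y \<noteq> last xs"
proof (cases "y = last xs")
  case True then show ?thesis using that by blast
next
  case False
  have ne: "xs \<noteq> []" using assms by auto
  have "y \<in> set (butlast xs)" using assms False ne
    by (metis append_butlast_last_id in_set_butlast_appendI rotate1.simps(2) set_ConsD set_rotate1)
  then obtain B1 B2 where "butlast xs = B1 @ y # B2" by (meson split_list)
  then have "xs = B1 @ y # B2 @ [last xs]" using ne by (metis append.assoc append_Cons append_butlast_last_id)
  then show ?thesis using that False by blast
qed

lemma move_last_after_perm:
  assumes "distinct xs" "y \<in> set xs"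
  shows "distinct (move_last_after y xs) \<and> set (move_last_after y xs) = set xs
         \<and> length (move_last_after y xs) = length xs"
  using assms(2)
proof (cases rule: move_target_cases)
  case 1
  have "xs \<noteq> []" using assms by auto
  then show ?thesis using 1 assms by (simp add: move_last_after_last)
next
  case (2 B1 B2)
  have d: "distinct (B1 @ y # B2 @ [last xs])" using assms(1) 2 by simp
  then have "y \<notin> set B1" "y \<notin> set B2" by auto
  then have "move_last_after y xs = B1 @ y # last xs # B2"
    using 2 move_last_after_split by metis
  moreover have "distinct (B1 @ y # z # B2) \<and> set (B1 @ y # z # B2) = set (B1 @ y # B2 @ [z])
      \<and> length (B1 @ y # z # B2) = length (B1 @ y # B2 @ [z])"
    if "distinct (B1 @ y # B2 @ [z])" for z
    using that by auto
  ultimately show ?thesis using d 2(1) by metis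
qed

lemma move_last_after_map:
  assumes "inj_on f (insert y (set xs))"
  shows "map f (move_last_after y xs) = move_last_after (f y) (map f xs)"
proof (cases "xs = []")
  case True then show ?thesis by (simp add: move_last_after_def Let_def)
next
  case False
  have l: "last (map f xs) = f (last xs)" using False by (simp add: last_map)
  have eq: "(f (last xs) = f y) = (last xs = y)"
    using assms False by (metis inj_on_eq_iff insertI1 insertI2 last_in_set)
  have c: "map f (concat (map (\<lambda>w. if w = y then [w, last xs] else [w]) L)) =
        concat (map (\<lambda>w. if w = f y then [w, f (last xs)] else [w]) (map f L))"
    if "set L \<subseteq> set xs" for L
    using that proof (induction L)
    case Nil then show ?case by simp
  next
    case (Cons a L)
    have "(f a = f y) = (a = y)"
      using assms Cons.prems by (metis inj_on_eq_iff insertI1 insertI2 list.set_intros(1) subsetD)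
    then show ?case using Cons by auto
  qed
  have "set (butlast xs) \<subseteq> set xs" by (simp add: in_set_butlastD subsetI)
  then show ?thesis using False l eq c[of "butlast xs"]
    by (simp add: move_last_after_def Let_def map_butlast)
qed


section \<open>Rauzy moves on reduced permutations\<close>

text \<open>In the top move the bottom row changes: the letter at bottom position m (the last
one) lands right after bottom position x, i.e. the bottom positions are relabelled
by top_shift m x.\<close>

definition top_shift :: "nat \<Rightarrow> nat \<Rightarrow> nat \<Rightarrow> nat" where
  "top_shift m x w = (if w = m then x + 1 else if x < w then w + 1 else w)"

definition mtop :: "nat list \<Rightarrow> nat list" where
  "mtop xs = (if last xs = length xs - 1 then xs else map (top_shift (length xs - 1) (last xs)) xs)"

text \<open>In the bottom move the top row changes: its last entry moves right after the entry
carrying the last bottom position.\<close>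

definition mbot :: "nat list \<Rightarrow> nat list" where
  "mbot xs = move_last_after (length xs - 1) xs"

definition red_step :: "nat list \<Rightarrow> nat list \<Rightarrow> bool" where
  "red_step x y \<longleftrightarrow> y = mtop x \<or> y = mbot x"

lemma lperm_length:
  assumes "is_lperm A p" shows "length (fst p) = length (snd p)"
  using assms unfolding is_lperm_def by (metis distinct_card)

lemma reduced_rauzy_b:
  assumes "is_lperm A p" "fst p \<noteq> []"
  shows "reduced (rauzy_b p) = mbot (reduced p)"
proof -
  obtain T B where p: "p = (T, B)" by (cases p)
  have d: "distinct T" "distinct B" "set T = set B" and ne: "T \<noteq> []" "B \<noteq> []"
    using assms p unfolding is_lperm_def by auto
  have len: "length T = length B" using lperm_length[OF assms(1)] p by simp
  have inj: "inj_on (\<lambda>a. pos a B) (insert (last B) (set T))"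
    using d ne by (intro inj_onI) (auto intro: pos_inj)
  have "reduced (rauzy_b p) = map (\<lambda>a. pos a B) (move_last_after (last B) T)"
    by (simp add: p rauzy_b_def reduced_def)
  also have "\<dots> = move_last_after (pos (last B) B) (map (\<lambda>a. pos a B) T)"
    by (rule move_last_after_map[OF inj])
  also have "\<dots> = mbot (reduced p)"
    using d ne len by (simp add: mbot_def reduced_def p pos_last)
  finally show ?thesis .
qed

lemma pos_after_move:
  assumes d: "distinct (B1 @ y # B2 @ [z])" and a: "a \<in> set (B1 @ y # B2 @ [z])"
  shows "pos a (B1 @ y # z # B2) =
           top_shift (length B1 + length B2 + 1) (length B1) (pos a (B1 @ y # B2 @ [z]))"
proof -
  have "a \<in> set B1 \<or> a = y \<or> a \<in> set B2 \<or> a = z" using a by auto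
  then show ?thesis
  proof (elim disjE)
    assume a: "a \<in> set B1"
    then show ?thesis using d pos_lt[OF a] by (auto simp: pos_append pos_Cons top_shift_def)
  next
    assume a: "a \<in> set B2"
    then show ?thesis using d pos_lt[OF a] by (auto simp: pos_append pos_Cons top_shift_def)
  qed (use d in \<open>auto simp: pos_append pos_Cons top_shift_def\<close>)
qed

lemma reduced_rauzy_t:
  assumes "is_lperm A p" "fst p \<noteq> []"
  shows "reduced (rauzy_t p) = mtop (reduced p)"
proof -
  obtain T B where p: "p = (T, B)" by (cases p)
  have d: "distinct T" "distinct B" "set T = set B" and ne: "T \<noteq> []" "B \<noteq> []"
    using assms p unfolding is_lperm_def by auto
  have len: "length T = length B" using lperm_length[OF assms(1)] p by simp
  have last_red: "last (reduced p) = pos (last T) B"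
    using ne by (simp add: reduced_def p last_map)
  have len_red: "length (reduced p) = length B" using len by (simp add: reduced_def p)
  have "last T \<in> set B" using d(3) ne(1) last_in_set by metis
  then show ?thesis
  proof (cases rule: move_target_cases)
    case 1
    then show ?thesis using d ne last_red len_red
      by (simp add: rauzy_t_def reduced_def p mtop_def move_last_after_last pos_last)
  next
    case (2 B1 B2)
    define y z where "y = last T" and "z = last B"
    have B: "B = B1 @ y # B2 @ [z]" and yz: "y \<noteq> z" using 2 y_def z_def by auto
    have dB: "distinct (B1 @ y # B2 @ [z])" using d B by simp
    have moved: "move_last_after y B = B1 @ y # z # B2"
      using B yz dB move_last_after_split[of y B1 B2 z] by auto
    have x: "pos y B = length B1" using dB B by (simp add: pos_append pos_Cons)
    have m: "length B - 1 = length B1 + length B2 + 1" using B by simp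
    have "reduced (rauzy_t p) = map (\<lambda>a. pos a (B1 @ y # z # B2)) T"
      using moved by (simp add: rauzy_t_def reduced_def p y_def)
    also have "\<dots> = map (\<lambda>a. top_shift (length B - 1) (pos y B) (pos a B)) T"
      using pos_after_move[OF dB] d B x m by (intro map_cong) auto
    also have "\<dots> = mtop (reduced p)"
      using last_red len_red x m by (simp add: mtop_def reduced_def p y_def comp_def)
    finally show ?thesis .
  qed
qed

lemma is_lperm_rauzy_t:
  assumes "is_lperm A p" "fst p \<noteq> []"
  shows "is_lperm A (rauzy_t p) \<and> fst (rauzy_t p) \<noteq> []"
proof -
  obtain T B where p: "p = (T, B)" by (cases p)
  have d: "distinct T" "distinct B" "set T = A" "set B = A" and ne: "T \<noteq> []"
    using assms p unfolding is_lperm_def by auto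
  have "last T \<in> set B" using d(3,4) ne last_in_set by metis
  then show ?thesis using move_last_after_perm[OF d(2)] d ne by (simp add: is_lperm_def rauzy_t_def p)
qed

lemma is_lperm_rauzy_b:
  assumes "is_lperm A p" "fst p \<noteq> []"
  shows "is_lperm A (rauzy_b p) \<and> fst (rauzy_b p) \<noteq> []"
proof -
  obtain T B where p: "p = (T, B)" by (cases p)
  have d: "distinct T" "distinct B" "set T = A" "set B = A" and ne: "T \<noteq> []"
    using assms p unfolding is_lperm_def by auto
  have "last B \<in> set T" using d ne by (metis last_in_set set_empty)
  then have "distinct (move_last_after (last B) T) \<and> set (move_last_after (last B) T) = set T
      \<and> length (move_last_after (last B) T) = length T"
    using move_last_after_perm[OF d(1)] by blast
  then show ?thesis using d ne by (auto simp: is_lperm_def rauzy_b_def p)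
qed

lemma rauzy_step_reduced:
  assumes "is_lperm A q" "fst q \<noteq> []" "rauzy_step q r"
  shows "is_lperm A r \<and> fst r \<noteq> [] \<and> red_step (reduced q) (reduced r)"
proof -
  have "r = rauzy_t q \<or> r = rauzy_b q" using assms(3) by (simp add: rauzy_step_def)
  then show ?thesis
  proof
    assume "r = rauzy_t q"
    then show ?thesis
      using is_lperm_rauzy_t[OF assms(1,2)] reduced_rauzy_t[OF assms(1,2)] by (simp add: red_step_def)
  next
    assume "r = rauzy_b q"
    then show ?thesis
      using is_lperm_rauzy_b[OF assms(1,2)] reduced_rauzy_b[OF assms(1,2)] by (simp add: red_step_def)
  qed
qed

lemma red_step_lift:
  assumes "is_lperm A q" "fst q \<noteq> []" "red_step (reduced q) y"
  shows "\<exists>r. rauzy_step q r \<and> reduced r = y"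
proof -
  have "y = mtop (reduced q) \<or> y = mbot (reduced q)" using assms(3) by (simp add: red_step_def)
  then show ?thesis
    using reduced_rauzy_t[OF assms(1,2)] reduced_rauzy_b[OF assms(1,2)] unfolding rauzy_step_def by blast
qed

lemma reduced_rauzy_vertices_eq:
  assumes "is_lperm A p" "fst p \<noteq> []"
  shows "reduced_rauzy_vertices p = {\<tau>. red_step\<^sup>*\<^sup>* (reduced p) \<tau>}"
proof (intro set_eqI iffI)
  fix \<tau> assume "\<tau> \<in> reduced_rauzy_vertices p"
  then obtain q where q: "rauzy_step\<^sup>*\<^sup>* p q" "\<tau> = reduced q"
    by (auto simp: reduced_rauzy_vertices_def)
  have "is_lperm A q \<and> fst q \<noteq> [] \<and> red_step\<^sup>*\<^sup>* (reduced p) (reduced q)"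
    using q(1)
  proof (induction rule: rtranclp_induct)
    case base then show ?case using assms by simp
  next
    case (step q r)
    then show ?case using rauzy_step_reduced[of A q r] by (meson rtranclp.rtrancl_into_rtrancl)
  qed
  then show "\<tau> \<in> {\<tau>. red_step\<^sup>*\<^sup>* (reduced p) \<tau>}" using q by simp
next
  fix \<tau> assume "\<tau> \<in> {\<tau>. red_step\<^sup>*\<^sup>* (reduced p) \<tau>}"
  then have "red_step\<^sup>*\<^sup>* (reduced p) \<tau>" by simp
  then have "\<exists>q. rauzy_step\<^sup>*\<^sup>* p q \<and> is_lperm A q \<and> fst q \<noteq> [] \<and> reduced q = \<tau>"
  proof (induction rule: rtranclp_induct)
    case base then show ?case using assms by blast
  next
    case (step x y)
    then obtain q where q: "rauzy_step\<^sup>*\<^sup>* p q" "is_lperm A q" "fst q \<noteq> []" "reduced q = x" by auto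
    then obtain r where "rauzy_step q r" "reduced r = y" using red_step_lift step(2) by blast
    then show ?case using q rauzy_step_reduced[OF q(2,3)] by (blast intro: rtranclp.rtrancl_into_rtrancl)
  qed
  then show "\<tau> \<in> reduced_rauzy_vertices p" by (auto simp: reduced_rauzy_vertices_def)
qed


definition is_perm :: "nat \<Rightarrow> nat list \<Rightarrow> bool" where
  "is_perm k xs \<longleftrightarrow> distinct xs \<and> set xs = {0..<k}"

lemma is_perm_len: "is_perm k xs \<Longrightarrow> length xs = k"
  unfolding is_perm_def by (metis card_atLeastLessThan diff_zero distinct_card)

lemma is_perm_lt: "is_perm n t \<Longrightarrow> w \<in> set t \<Longrightarrow> w < n"
  unfolding is_perm_def by auto

lemma is_perm_mtop: assumes "is_perm k xs" shows "is_perm k (mtop xs)"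
proof (cases "xs = [] \<or> last xs = length xs - 1")
  case True then show ?thesis using assms by (auto simp: mtop_def)
next
  case False
  have len: "length xs = k" using is_perm_len[OF assms] .
  have ne: "xs \<noteq> []" using False by auto
  have xk: "last xs < k" using assms ne unfolding is_perm_def by (metis atLeastLessThan_iff last_in_set)
  let ?r = "top_shift (k - 1) (last xs)"
  have inj: "inj_on ?r {0..<k}" using xk by (intro inj_onI) (simp add: top_shift_def split: if_splits)
  have sub: "?r ` {0..<k} \<subseteq> {0..<k}" using xk False len by (auto simp: top_shift_def)
  have im: "?r ` {0..<k} = {0..<k}" using endo_inj_surj[OF _ sub inj] by simp
  show ?thesis using assms False ne len inj im unfolding is_perm_def
    by (simp add: mtop_def distinct_map inj_on_subset)
qed

lemma is_perm_mbot: assumes "is_perm k xs" "k \<ge> 1" shows "is_perm k (mbot xs)" "length (mbot xs) = k"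
proof -
  have len: "length xs = k" using is_perm_len[OF assms(1)] .
  have "length xs - 1 \<in> set xs" using assms len unfolding is_perm_def by auto
  then have "distinct (mbot xs) \<and> set (mbot xs) = set xs \<and> length (mbot xs) = length xs"
    using move_last_after_perm[of xs "length xs - 1"] assms(1) unfolding is_perm_def mbot_def by simp
  then show "is_perm k (mbot xs)" "length (mbot xs) = k" using assms len unfolding is_perm_def by auto
qed

lemma map_plus_upt: "map (\<lambda>w. w + c) [p..<q] = [p+c..<q+c]"
  by (induction q) auto

lemma upt_split: "p \<le> r \<Longrightarrow> r \<le> q \<Longrightarrow> [p..<q] = [p..<r] @ [r..<q]"
  by (metis le_add_diff_inverse upt_add_eq_append)

lemma rev_upt_split: "p \<le> r \<Longrightarrow> r \<le> q \<Longrightarrow> rev [p..<q] = rev [r..<q] @ rev [p..<r]"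
  by (simp add: upt_split[of p r q])

definition sym_perm :: "nat \<Rightarrow> nat list" where "sym_perm k = rev [0..<k]"

lemma sym_perm_Suc: "sym_perm (Suc k) = k # sym_perm k" by (simp add: sym_perm_def)
lemma len_sym_perm[simp]: "length (sym_perm k) = k" by (simp add: sym_perm_def)
lemma hd_sym_perm: "k \<ge> 1 \<Longrightarrow> hd (sym_perm k) = k - 1"
  by (cases k) (auto simp: sym_perm_Suc)
lemma tl_sym_perm: "tl (sym_perm k) = sym_perm (k - 1)"
  by (cases k) (auto simp: sym_perm_Suc sym_perm_def)
lemma last_sym_perm: "k \<ge> 1 \<Longrightarrow> last (sym_perm k) = 0"
  by (simp add: sym_perm_def last_rev)
lemma nth_sym_perm: "i < k \<Longrightarrow> sym_perm k ! i = k - 1 - i"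
  by (simp add: sym_perm_def rev_nth)
lemma is_perm_sym_perm: "is_perm k (sym_perm k)" by (simp add: sym_perm_def is_perm_def)
lemma map_plus_sym_perm: "map (\<lambda>w. w + c) (sym_perm k) = rev [c..<k+c]"
  by (simp add: sym_perm_def rev_map[symmetric] map_plus_upt)

lemma map_Suc_plus_sym_perm: "map (\<lambda>w. Suc (w + c)) (sym_perm k) = rev [Suc c..<k + Suc c]"
  using map_plus_sym_perm[of "Suc c" k] by simp

lemma sym_perm_Suc_alt: "sym_perm (Suc i) = rev [1..<Suc i] @ [0]"
  by (simp add: sym_perm_def upt_conv_Cons)


section \<open>Two block insertions\<close>

text \<open>It commutes with the top
move always and with the bottom move unless the first entry of s is maximal.\<close>

definition eblock :: "nat \<Rightarrow> nat list \<Rightarrow> nat list" where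
  "eblock a s = (hd s + a) # rev [0..<a] @ map (\<lambda>w. w + a) (tl s)"

lemma len_eblock: "s \<noteq> [] \<Longrightarrow> length (eblock a s) = length s + a"
  by (cases s) (auto simp: eblock_def)
lemma eblock_0: "s \<noteq> [] \<Longrightarrow> eblock 0 s = s"
  by (cases s) (auto simp: eblock_def)
lemma hd_eblock: "hd (eblock a s) = hd s + a" by (simp add: eblock_def)
lemma last_eblock: "length s \<ge> 2 \<Longrightarrow> last (eblock a s) = last s + a"
  by (cases s) (auto simp: eblock_def last_map)
lemma eblock_nth1: "a \<ge> 1 \<Longrightarrow> eblock a s ! 1 = a - 1"
  by (cases a) (auto simp: eblock_def nth_append)
lemma eblock_inj: "eblock a s = eblock a s' \<Longrightarrow> s \<noteq> [] \<Longrightarrow> s' \<noteq> [] \<Longrightarrow> s = s'"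
  unfolding eblock_def by (cases s; cases s') (auto simp: inj_on_def dest: map_inj_on)

lemma is_perm_eblock: assumes "is_perm j s" "j \<ge> 1" shows "is_perm (j + a) (eblock a s)"
proof -
  have "s \<noteq> []" using assms is_perm_len[OF assms(1)] by auto
  then obtain x r where s: "s = x # r" by (meson list.exhaust)
  have d: "distinct r" "x \<notin> set r" and st: "insert x (set r) = {0..<j}"
    using assms s unfolding is_perm_def by auto
  have im: "(\<lambda>w. w + a) ` {0..<j} = {a..<j+a}" by (simp add: image_add_atLeastLessThan')
  have st2: "set (eblock a s) = {0..<a} \<union> (\<lambda>w. w + a) ` {0..<j}"
    using st[symmetric] s by (auto simp: eblock_def)
  have "set (eblock a s) = {0..<j+a}" unfolding st2 im by auto
  moreover have "distinct (eblock a s)"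
  proof -
    have "x < j" using st by auto
    moreover have "\<forall>w\<in>set r. w < j" using st by auto
    ultimately show ?thesis using d s by (auto simp: eblock_def distinct_map inj_on_def)
  qed
  ultimately show ?thesis by (simp add: is_perm_def)
qed

lemma top_shift_shift: "top_shift (m + a) (x + a) (w + a) = top_shift m x w + a"
  by (simp add: top_shift_def)

lemma mtop_eblock: assumes "length s \<ge> 2" shows "mtop (eblock a s) = eblock a (mtop s)"
proof -
  define x where "x = hd s"
  define r where "r = tl s"
  have s: "s = x # r" using assms by (cases s) (auto simp: x_def r_def)
  have r: "r \<noteq> []" using assms by (cases s) (auto simp: r_def)
  have lE: "length (eblock a s) - 1 = (length s - 1) + a" and laE: "last (eblock a s) = last s + a"
    using assms len_eblock[of s a] last_eblock[OF assms] s by auto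
  show ?thesis
  proof (cases "last s = length s - 1")
    case True then show ?thesis using lE laE by (simp add: mtop_def)
  next
    case False
    let ?m = "length s - 1" let ?x = "last s"
    have m1: "?m \<ge> 1" using assms by simp
    have blk: "map (top_shift (?m + a) (?x + a)) (rev [0..<a]) = rev [0..<a]"
      using m1 by (intro map_idI) (auto simp: top_shift_def)
    have "mtop (eblock a s) = map (top_shift (?m + a) (?x + a)) (eblock a s)"
      using False lE laE by (simp add: mtop_def)
    also have "\<dots> = eblock a (map (top_shift ?m ?x) s)"
      using s blk by (simp add: eblock_def top_shift_shift[symmetric] comp_def)
    also have "\<dots> = eblock a (mtop s)" using False by (simp add: mtop_def)
    finally show ?thesis .
  qed
qed

lemma mbot_eblock: assumes "length s \<ge> 2" "hd s \<noteq> length s - 1" shows "mbot (eblock a s) = eblock a (mbot s)"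
proof -
  define x where "x = hd s"
  define r where "r = tl s"
  have s: "s = x # r" using assms by (cases s) (auto simp: x_def r_def)
  have r: "r \<noteq> []" using assms by (cases s) (auto simp: r_def)
  let ?m = "length s - 1"
  have lE: "length (eblock a s) - 1 = ?m + a" using len_eblock[of s a] s by auto
  have xm: "x \<noteq> ?m" using assms s by simp
  have "mbot (eblock a s) = move_last_after (?m + a) (((x + a) # rev [0..<a]) @ map (\<lambda>w. w + a) r)"
    using lE s by (simp add: mbot_def eblock_def add.commute)
  also have "\<dots> = ((x + a) # rev [0..<a]) @ move_last_after (?m + a) (map (\<lambda>w. w + a) r)"
    using xm r assms(1) s by (intro move_last_after_append) auto
  also have "move_last_after (?m + a) (map (\<lambda>w. w + a) r) = map (\<lambda>w. w + a) (move_last_after ?m r)"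
    by (subst move_last_after_map) (auto simp: inj_on_def)
  also have "mbot s = x # move_last_after ?m r"
    using move_last_after_append[of ?m "[x]" r] xm r s by (simp add: mbot_def)
  ultimately show ?thesis by (simp add: eblock_def)
qed

lemma mbot_eblock_sym: assumes "j \<ge> 2"
  shows "mbot (eblock a (sym_perm j)) = (if j = 2 then sym_perm (a + 2) else eblock (a + 1) (sym_perm (j - 1)))"
proof -
  have e1: "eblock a (sym_perm j) = (j - 1 + a) # rev [0..<a] @ rev [a..<j - 1 + a]"
    using assms by (simp add: eblock_def hd_sym_perm tl_sym_perm map_plus_sym_perm)
  have s2: "rev [a..<j - 1 + a] = rev [Suc a..<j - 1 + a] @ [a]"
    using assms rev_upt_split[of a "Suc a" "j - 1 + a"] by simp
  have eq: "eblock a (sym_perm j) = [] @ (j - 1 + a) # (rev [0..<a] @ rev [Suc a..<j - 1 + a]) @ [a]"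
    using e1 s2 by simp
  have L: "length (eblock a (sym_perm j)) - 1 = j - 1 + a" using assms len_eblock[of "sym_perm j" a] by (auto simp: sym_perm_def)
  have "mbot (eblock a (sym_perm j)) = move_last_after (j - 1 + a) (eblock a (sym_perm j))" by (simp only: mbot_def L)
  also have "\<dots> = move_last_after (j - 1 + a) ([] @ (j - 1 + a) # (rev [0..<a] @ rev [Suc a..<j - 1 + a]) @ [a])"
    by (simp only: eq)
  also have "\<dots> = [] @ (j - 1 + a) # a # (rev [0..<a] @ rev [Suc a..<j - 1 + a])"
    using assms by (intro move_last_after_split) auto
  finally have "mbot (eblock a (sym_perm j)) = [] @ (j - 1 + a) # a # (rev [0..<a] @ rev [Suc a..<j - 1 + a])" .
  then have r: "mbot (eblock a (sym_perm j)) = (j - 1 + a) # rev [0..<Suc a] @ rev [Suc a..<j - 1 + a]" by simp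
  show ?thesis
  proof (cases "j = 2")
    case True then show ?thesis using r by (simp add: sym_perm_def)
  next
    case False
    define i where "i = j - 3"
    have j: "j = i + 3" using assms False by (simp add: i_def)
    have "eblock (a + 1) (sym_perm (j - 1)) = (j - 1 + a) # rev [0..<Suc a] @ rev [Suc a..<j - 1 + a]"
      by (simp add: j eblock_def hd_sym_perm tl_sym_perm map_Suc_plus_sym_perm)
    then show ?thesis using r False by simp
  qed
qed

text \<open>fblock a s prepends the block a, ..., 1 and raises the nonzero entries of s by a.
It commutes with the bottom move always and with the top move unless the last entry
of s is 0.\<close>

definition fshift :: "nat \<Rightarrow> nat \<Rightarrow> nat" where "fshift a w = (if w = 0 then 0 else w + a)"

definition fblock :: "nat \<Rightarrow> nat list \<Rightarrow> nat list" where
  "fblock a s = rev [1..<a+1] @ map (fshift a) s"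

lemma len_fblock[simp]: "length (fblock a u) = length u + a" by (simp add: fblock_def fshift_def)
lemma fblock_0[simp]: "fblock 0 u = u" by (simp add: fblock_def fshift_def map_idI)
lemma hd_fblock: "a \<ge> 1 \<Longrightarrow> hd (fblock a u) = a" by (cases a) (auto simp: fblock_def fshift_def)
lemma last_fblock: "u \<noteq> [] \<Longrightarrow> last (fblock a u) = (if last u = 0 then 0 else last u + a)"
  by (simp add: fblock_def fshift_def last_map)
lemma fblock_nth1: "c \<ge> 2 \<Longrightarrow> fblock c u ! 1 = c - 1"
  by (simp add: fblock_def fshift_def nth_append rev_nth)
lemma fshift_inj: "inj (fshift a)" by (auto simp: inj_def fshift_def split: if_splits)
lemma fblock_inj: "fblock a u = fblock a u' \<Longrightarrow> u = u'"
  unfolding fblock_def using fshift_inj by (simp add: inj_map_eq_map)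

lemma is_perm_fblock: assumes "is_perm j u" "j \<ge> 1" shows "is_perm (j + a) (fblock a u)"
proof -
  have d: "distinct u" and st: "set u = {0..<j}" using assms unfolding is_perm_def by auto
  have im: "fshift a ` {0..<j} = insert 0 {a+1..<j+a}"
  proof
    show "fshift a ` {0..<j} \<subseteq> insert 0 {a+1..<j+a}" by (auto simp: fshift_def)
    show "insert 0 {a+1..<j+a} \<subseteq> fshift a ` {0..<j}"
    proof
      fix v assume v: "v \<in> insert 0 {a+1..<j+a}"
      show "v \<in> fshift a ` {0..<j}"
      proof (cases "v = 0")
        case True then show ?thesis using assms(2) by (auto simp: fshift_def image_iff intro: bexI[of _ 0])
      next
        case False then have "fshift a (v - a) = v" "v - a \<in> {0..<j}" using v by (auto simp: fshift_def)
        then show ?thesis by (metis imageI)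
      qed
    qed
  qed
  have "set (fblock a u) = {0..<j+a}" unfolding fblock_def using st im by auto
  moreover have "distinct (fblock a u)"
  proof -
    have d1: "distinct (map (fshift a) u)" using d fshift_inj[of a] by (simp add: distinct_map inj_on_subset[of _ UNIV])
    have d2: "\<forall>v\<in>set (map (fshift a) u). v \<notin> set (rev [1..<a+1])" by (auto simp: fshift_def)
    show ?thesis unfolding fblock_def using d1 d2 by (auto simp: distinct_append)
  qed
  ultimately show ?thesis by (simp add: is_perm_def)
qed

lemma mbot_fblock: assumes "length u \<ge> 2" shows "mbot (fblock a u) = fblock a (mbot u)"
proof -
  let ?m = "length u - 1"
  have L: "length (fblock a u) - 1 = ?m + a" using assms by simp
  have "mbot (fblock a u) = move_last_after (?m + a) (rev [1..<a+1] @ map (fshift a) u)"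
    unfolding mbot_def L by (simp add: fblock_def)
  also have "\<dots> = rev [1..<a+1] @ move_last_after (?m + a) (map (fshift a) u)"
    using assms by (intro move_last_after_append) auto
  also have "?m + a = fshift a ?m" using assms by (simp add: fshift_def)
  also have "move_last_after (fshift a ?m) (map (fshift a) u) = map (fshift a) (move_last_after ?m u)"
    using fshift_inj by (subst move_last_after_map) (auto simp: inj_on_def inj_def)
  finally show ?thesis by (simp add: fblock_def mbot_def)
qed

lemma mtop_fblock: assumes "length u \<ge> 2" "last u \<noteq> 0" shows "mtop (fblock a u) = fblock a (mtop u)"
proof -
  let ?m = "length u - 1" let ?x = "last u"
  have ne: "u \<noteq> []" using assms by auto
  have lF: "length (fblock a u) - 1 = ?m + a" "last (fblock a u) = ?x + a"
    using assms ne by (auto simp: last_fblock)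
  show ?thesis
  proof (cases "?x = ?m")
    case True then show ?thesis using lF by (simp add: mtop_def)
  next
    case False
    have blk: "map (top_shift (?m + a) (?x + a)) (rev [1..<a+1]) = rev [1..<a+1]"
      using assms by (intro map_idI) (auto simp: top_shift_def)
    have g: "top_shift (?m + a) (?x + a) (fshift a w) = fshift a (top_shift ?m ?x w)" for w
      using assms by (auto simp: top_shift_def fshift_def)
    have "mtop (fblock a u) = map (top_shift (?m + a) (?x + a)) (fblock a u)"
      using False lF by (simp add: mtop_def)
    also have "\<dots> = fblock a (map (top_shift ?m ?x) u)"
      using blk g by (simp add: fblock_def comp_def)
    also have "\<dots> = fblock a (mtop u)" using False by (simp add: mtop_def)
    finally show ?thesis .
  qed
qed

lemma map_fshift_rev_upt: "p \<ge> 1 \<Longrightarrow> map (fshift a) (rev [p..<q]) = rev [p+a..<q+a]"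
proof -
  assume p: "p \<ge> 1"
  have "map (fshift a) [p..<q] = map (\<lambda>w. w + a) [p..<q]" using p by (intro map_cong) (auto simp: fshift_def)
  then show ?thesis by (simp add: rev_map[symmetric] map_plus_upt)
qed

lemma map_top_shift_0_rev_upt: "p \<ge> 1 \<Longrightarrow> q \<le> m \<Longrightarrow> map (top_shift m 0) (rev [p..<q]) = rev [p+1..<q+1]"
proof -
  assume p: "p \<ge> 1" and q: "q \<le> m"
  have "map (top_shift m 0) [p..<q] = map Suc [p..<q]" using p q by (intro map_cong) (auto simp: top_shift_def)
  then show ?thesis by (simp add: rev_map[symmetric] map_Suc_upt)
qed

lemma mtop_fblock_sym: assumes "j \<ge> 2"
  shows "mtop (fblock a (sym_perm j)) = (if j = 2 then sym_perm (a + 2) else fblock (a + 1) (sym_perm (j - 1)))"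
proof -
  obtain i where j: "j = i + 2" using assms by (metis add.commute le_add_diff_inverse)
  have sj: "sym_perm j = (i + 1) # rev [1..<i+1] @ [0]" using j by (simp add: sym_perm_def upt_conv_Cons)
  have F1: "fblock a (sym_perm j) = rev [1..<a+1] @ (i + 1 + a) # rev [a+1..<i+1+a] @ [0]"
    using sj by (simp add: fblock_def map_fshift_rev_upt fshift_def add.commute)
  have L: "length (fblock a (sym_perm j)) - 1 = i + 1 + a" using j by simp
  have La: "last (fblock a (sym_perm j)) = 0" using F1 by simp
  have "mtop (fblock a (sym_perm j)) = map (top_shift (i + 1 + a) 0) (fblock a (sym_perm j))"
    using L La by (simp add: mtop_def)
  also have "\<dots> = rev [Suc (Suc 0)..<a+2] @ 1 # rev [a+2..<i+2+a] @ [0]"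
    unfolding F1 by (simp add: map_top_shift_0_rev_upt top_shift_def numeral_2_eq_2)
  finally have M: "mtop (fblock a (sym_perm j)) = rev [Suc (Suc 0)..<a+2] @ 1 # rev [a+2..<i+2+a] @ [0]" .
  have r1: "rev [1..<a+2] = rev [Suc (Suc 0)..<a+2] @ [1]" by (simp add: upt_conv_Cons)
  show ?thesis
  proof (cases "i = 0")
    case True
    have "rev [0..<a+2] = rev [Suc (Suc 0)..<a+2] @ [1, 0]" by (simp add: upt_conv_Cons)
    then show ?thesis using M True j by (simp add: sym_perm_def)
  next
    case False
    then obtain i' where i: "i = Suc i'" by (cases i) auto
    have "fblock (a + 1) (sym_perm (j - 1)) = rev [1..<a+2] @ rev [a+2..<i+2+a] @ [0]"
      using j i by (simp add: fblock_def sym_perm_Suc_alt map_fshift_rev_upt fshift_def add.commute add.left_commute)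
    then show ?thesis using M r1 False j by simp
  qed
qed

lemma mbot_sym_perm: "k \<ge> 2 \<Longrightarrow> mbot (sym_perm k) = (if k = 2 then sym_perm 2 else eblock 1 (sym_perm (k - 1)))"
  using mbot_eblock_sym[of k 0] by (cases "k = 2") (auto simp: eblock_0 sym_perm_def numeral_2_eq_2)

lemma mtop_sym_perm: "k \<ge> 2 \<Longrightarrow> mtop (sym_perm k) = (if k = 2 then sym_perm 2 else fblock 1 (sym_perm (k - 1)))"
  using mtop_fblock_sym[of k 0] by (cases "k = 2") (auto simp: numeral_2_eq_2)

lemma eblock_ne_fblock:
  assumes "s \<noteq> []" "hd s \<ge> 1" "a \<ge> 1" "c \<ge> 1"
  shows "eblock a s \<noteq> fblock c u"
proof
  assume e: "eblock a s = fblock c u"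
  then have h: "hd s + a = c" using hd_eblock[of a s] hd_fblock[OF assms(4), of u] by simp
  show False
  proof (cases "c \<ge> 2")
    case True
    have "a - 1 = c - 1" using e eblock_nth1[OF assms(3), of s] fblock_nth1[OF True, of u] by simp
    then show False using h assms by simp
  next
    case False then show False using h assms by simp
  qed
qed

lemma eblock_ne_sym_perm: "a \<ge> 1 \<Longrightarrow> a + 2 \<le> k \<Longrightarrow> eblock a s \<noteq> sym_perm k"
  using eblock_nth1[of a s] nth_sym_perm[of 1 k] by auto

lemma fblock_ne_sym_perm: "a \<ge> 1 \<Longrightarrow> a + 2 \<le> k \<Longrightarrow> fblock a u \<noteq> sym_perm k"
  using hd_fblock[of a u] hd_sym_perm[of k] by auto

lemma sym_perm_ne_fblock: "c \<ge> 1 \<Longrightarrow> length u \<ge> 2 \<Longrightarrow> sym_perm j \<noteq> fblock c u"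
proof
  assume c: "c \<ge> 1" and u: "length u \<ge> 2" and e: "sym_perm j = fblock c u"
  then have "j = length u + c" using len_sym_perm len_fblock by metis
  then show False using fblock_ne_sym_perm[OF c, of j u] e u by simp
qed

lemma eblock_eq_eblock: "eblock a s = eblock a' s' \<Longrightarrow> a \<ge> 1 \<Longrightarrow> a' \<ge> 1 \<Longrightarrow> s \<noteq> [] \<Longrightarrow> s' \<noteq> [] \<Longrightarrow> a = a' \<and> s = s'"
  using eblock_nth1[of a s] eblock_nth1[of a' s'] eblock_inj by (metis diff_le_self le_antisym Suc_pred' diff_Suc_1 le_add_diff_inverse2 One_nat_def)

lemma fblock_eq_fblock: "fblock a u = fblock a' u' \<Longrightarrow> a \<ge> 1 \<Longrightarrow> a' \<ge> 1 \<Longrightarrow> a = a' \<and> u = u'"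
  using hd_fblock[of a u] hd_fblock[of a' u'] fblock_inj by metis


section \<open>The hyperelliptic class\<close>

text \<open>hyp True k t (the half P_k) and hyp False k t (the half Q_k): P_k consists of
sym_perm k and the eblock-images of the smaller Q_j, Q_k of sym_perm k and the
fblock-images of the smaller P_j.  Their union is the Rauzy class of sym_perm k.\<close>

inductive hyp :: "bool \<Rightarrow> nat \<Rightarrow> nat list \<Rightarrow> bool" where
  hyp_sym: "k \<ge> 2 \<Longrightarrow> hyp b k (sym_perm k)"
| hyp_E: "hyp False j s \<Longrightarrow> j \<ge> 2 \<Longrightarrow> a \<ge> 1 \<Longrightarrow> hyp True (j + a) (eblock a s)"
| hyp_F: "hyp True j s \<Longrightarrow> j \<ge> 2 \<Longrightarrow> a \<ge> 1 \<Longrightarrow> hyp False (j + a) (fblock a s)"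

lemma hyp_basic: "hyp b k t \<Longrightarrow> k \<ge> 2 \<and> is_perm k t \<and> hd t \<ge> 1"
proof (induction rule: hyp.induct)
  case (hyp_sym k b) then show ?case by (simp add: is_perm_sym_perm hd_sym_perm)
next
  case (hyp_E j s a) then show ?case using is_perm_eblock[of j s a] by (simp add: hd_eblock)
next
  case (hyp_F j s a) then show ?case using is_perm_fblock[of j s a] by (simp add: hd_fblock)
qed

lemma hyp_len: "hyp b k t \<Longrightarrow> length t = k"
  using hyp_basic is_perm_len by blast

lemma hyp_True_2: assumes "hyp True 2 s" shows "s = sym_perm 2"
  using assms by (cases rule: hyp.cases) auto

lemma eblock_eq_hyp: "eblock a s = eblock a' s' \<Longrightarrow> hyp b j s \<Longrightarrow> hyp b' j' s' \<Longrightarrow> a \<ge> 1 \<Longrightarrow> a' \<ge> 1 \<Longrightarrow> a = a' \<and> s = s'"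
  using eblock_eq_eblock hyp_len hyp_basic by (metis list.size(3) not_numeral_le_zero)

lemma eblock_fblock_hyp: "hyp b j s \<Longrightarrow> a \<ge> 1 \<Longrightarrow> c \<ge> 1 \<Longrightarrow> eblock a s \<noteq> fblock c u"
  using eblock_ne_fblock hyp_basic hyp_len by (metis list.size(3) not_numeral_le_zero)

text \<open>The exceptional cases of the commutation lemmas only occur at the root.\<close>

lemma hyp_True_last: "hyp True k t \<Longrightarrow> t \<noteq> sym_perm k \<Longrightarrow> last t \<noteq> 0"
proof (induction True k t rule: hyp.induct)
  case (hyp_E j s a)
  then have "length s \<ge> 2" using hyp_len by auto
  then show ?case using hyp_E last_eblock by simp
qed simp_all

lemma hyp_False_hd: "hyp False k t \<Longrightarrow> t \<noteq> sym_perm k \<Longrightarrow> hd t \<noteq> k - 1"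
proof (induction False k t rule: hyp.induct)
  case (hyp_F j s a)
  then show ?case by (simp add: hd_fblock)
qed simp_all

lemma hyp_moves_sym:
  assumes "k \<ge> 2"
  shows "hyp True k (mbot (sym_perm k))" "hyp False k (mtop (sym_perm k))"
proof -
  show "hyp True k (mbot (sym_perm k))"
  proof (cases "k = 2")
    case True then show ?thesis using mbot_sym_perm[of 2] hyp.hyp_sym[of 2] by simp
  next
    case False
    then have "hyp True ((k - 1) + 1) (eblock 1 (sym_perm (k - 1)))"
      using assms by (intro hyp.hyp_E hyp.hyp_sym) auto
    then show ?thesis using mbot_sym_perm[of k] False assms by simp
  qed
  show "hyp False k (mtop (sym_perm k))"
  proof (cases "k = 2")
    case True then show ?thesis using mtop_sym_perm[of 2] hyp.hyp_sym[of 2] by simp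
  next
    case False
    then have "hyp False ((k - 1) + 1) (fblock 1 (sym_perm (k - 1)))"
      using assms by (intro hyp.hyp_F hyp.hyp_sym) auto
    then show ?thesis using mtop_sym_perm[of k] False assms by simp
  qed
qed

lemma hyp_moves_eblock:
  assumes s: "hyp False j s" and j: "j \<ge> 2" and a: "a \<ge> 1"
    and IH: "hyp False j (mtop s)" "s \<noteq> sym_perm j \<Longrightarrow> hyp False j (mbot s)"
  shows "hyp True (j + a) (mbot (eblock a s))" "hyp True (j + a) (mtop (eblock a s))"
proof -
  have ls: "length s = j" using s hyp_len by blast
  show "hyp True (j + a) (mbot (eblock a s))"
  proof (cases "s = sym_perm j")
    case s_sym: True
    show ?thesis
    proof (cases "j = 2")
      case True
      then show ?thesis
        using mbot_eblock_sym[of 2 a] s_sym hyp.hyp_sym[of "a + 2" True] by (simp add: add.commute)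
    next
      case False
      then have "hyp True ((j - 1) + (a + 1)) (eblock (a + 1) (sym_perm (j - 1)))"
        using j by (intro hyp.hyp_E hyp.hyp_sym) auto
      then show ?thesis using mbot_eblock_sym[of j a] False j s_sym by simp
    qed
  next
    case False
    have "hd s \<noteq> length s - 1" using hyp_False_hd[OF s False] ls by simp
    then have "mbot (eblock a s) = eblock a (mbot s)" using mbot_eblock ls j by simp
    then show ?thesis using hyp.hyp_E[OF IH(2)[OF False] j a] by simp
  qed
  show "hyp True (j + a) (mtop (eblock a s))"
    using mtop_eblock[of s a] ls j hyp.hyp_E[OF IH(1) j a] by simp
qed

lemma hyp_moves_fblock:
  assumes s: "hyp True j s" and j: "j \<ge> 2" and a: "a \<ge> 1"
    and IH: "hyp True j (mbot s)" "s \<noteq> sym_perm j \<Longrightarrow> hyp True j (mtop s)"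
  shows "hyp False (j + a) (mtop (fblock a s))" "hyp False (j + a) (mbot (fblock a s))"
proof -
  have ls: "length s = j" using s hyp_len by blast
  show "hyp False (j + a) (mtop (fblock a s))"
  proof (cases "s = sym_perm j")
    case s_sym: True
    show ?thesis
    proof (cases "j = 2")
      case True
      then show ?thesis
        using mtop_fblock_sym[of 2 a] s_sym hyp.hyp_sym[of "a + 2" False] by (simp add: add.commute)
    next
      case False
      then have "hyp False ((j - 1) + (a + 1)) (fblock (a + 1) (sym_perm (j - 1)))"
        using j by (intro hyp.hyp_F hyp.hyp_sym) auto
      then show ?thesis using mtop_fblock_sym[of j a] False j s_sym by simp
    qed
  next
    case False
    have "last s \<noteq> 0" using hyp_True_last[OF s False] .
    then have "mtop (fblock a s) = fblock a (mtop s)" using mtop_fblock ls j by simp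
    then show ?thesis using hyp.hyp_F[OF IH(2)[OF False] j a] by simp
  qed
  show "hyp False (j + a) (mbot (fblock a s))"
    using mbot_fblock[of s a] ls j hyp.hyp_F[OF IH(1) j a] by simp
qed

lemma hyp_closed:
  assumes "hyp b k t"
  shows "if b then hyp True k (mbot t) \<and> (t \<noteq> sym_perm k \<longrightarrow> hyp True k (mtop t))
         else hyp False k (mtop t) \<and> (t \<noteq> sym_perm k \<longrightarrow> hyp False k (mbot t))"
  using assms
proof (induction rule: hyp.induct)
  case (hyp_sym k b) then show ?case using hyp_moves_sym by simp
next
  case (hyp_E j s a) then show ?case using hyp_moves_eblock by simp
next
  case (hyp_F j s a) then show ?case using hyp_moves_fblock by simp
qed

text \<open>Every element of the class is reachable from the root.  reachP j and reachQ j
collect what is reachable from sym_perm j by the moves that commute with eblock,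
resp. fblock; hence these restricted paths can be transported by the insertions.\<close>

inductive reachP :: "nat \<Rightarrow> nat list \<Rightarrow> bool" for j where
  reachP_sym: "reachP j (sym_perm j)"
| reachP_mbot: "reachP j x \<Longrightarrow> reachP j (mbot x)"
| reachP_mtop: "reachP j x \<Longrightarrow> last x \<noteq> 0 \<Longrightarrow> reachP j (mtop x)"

inductive reachQ :: "nat \<Rightarrow> nat list \<Rightarrow> bool" for j where
  reachQ_sym: "reachQ j (sym_perm j)"
| reachQ_mtop: "reachQ j x \<Longrightarrow> reachQ j (mtop x)"
| reachQ_mbot: "reachQ j x \<Longrightarrow> hd x \<noteq> j - 1 \<Longrightarrow> reachQ j (mbot x)"

lemma reachP_reach: "reachP j x \<Longrightarrow> red_step\<^sup>*\<^sup>* (sym_perm j) x"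
  by (induction rule: reachP.induct) (auto simp: red_step_def intro: rtranclp.rtrancl_into_rtrancl)

lemma reachQ_reach: "reachQ j x \<Longrightarrow> red_step\<^sup>*\<^sup>* (sym_perm j) x"
  by (induction rule: reachQ.induct) (auto simp: red_step_def intro: rtranclp.rtrancl_into_rtrancl)

lemma reachP_perm: "reachP j x \<Longrightarrow> j \<ge> 1 \<Longrightarrow> is_perm j x"
  by (induction rule: reachP.induct) (auto simp: is_perm_sym_perm is_perm_mtop is_perm_mbot)

lemma reachQ_perm: "reachQ j x \<Longrightarrow> j \<ge> 1 \<Longrightarrow> is_perm j x"
  by (induction rule: reachQ.induct) (auto simp: is_perm_sym_perm is_perm_mtop is_perm_mbot)

lemma iter_mbot: "j \<ge> 2 \<Longrightarrow> (mbot ^^ a) (sym_perm (j + a)) = eblock a (sym_perm j)"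
proof (induction a arbitrary: j)
  case 0 then show ?case by (simp add: eblock_0 sym_perm_def)
next
  case (Suc a)
  have "(mbot ^^ Suc a) (sym_perm (j + Suc a)) = mbot ((mbot ^^ a) (sym_perm ((j + 1) + a)))" by simp
  also have "\<dots> = mbot (eblock a (sym_perm (j + 1)))" using Suc.IH[of "Suc j"] Suc.prems by simp
  also have "\<dots> = eblock (Suc a) (sym_perm j)" using mbot_eblock_sym[of "j + 1" a] Suc by simp
  finally show ?case .
qed

lemma iter_mtop: "j \<ge> 2 \<Longrightarrow> (mtop ^^ a) (sym_perm (j + a)) = fblock a (sym_perm j)"
proof (induction a arbitrary: j)
  case 0 then show ?case by simp
next
  case (Suc a)
  have "(mtop ^^ Suc a) (sym_perm (j + Suc a)) = mtop ((mtop ^^ a) (sym_perm ((j + 1) + a)))" by simp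
  also have "\<dots> = mtop (fblock a (sym_perm (j + 1)))" using Suc.IH[of "Suc j"] Suc.prems by simp
  also have "\<dots> = fblock (Suc a) (sym_perm j)" using mtop_fblock_sym[of "j + 1" a] Suc by simp
  finally show ?case .
qed

lemma reachP_iter_mbot: "reachP k ((mbot ^^ a) (sym_perm k))"
  by (induction a) (auto intro: reachP.intros)

lemma reachQ_iter_mtop: "reachQ k ((mtop ^^ a) (sym_perm k))"
  by (induction a) (auto intro: reachQ.intros)

lemma reachP_eblock: "reachQ j x \<Longrightarrow> j \<ge> 2 \<Longrightarrow> a \<ge> 1 \<Longrightarrow> reachP (j + a) (eblock a x)"
proof (induction rule: reachQ.induct)
  case reachQ_sym
  then show ?case using reachP_iter_mbot[of "j + a" a] iter_mbot[of j a] by simp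
next
  case (reachQ_mtop x)
  have lx: "length x = j" using reachQ_perm[OF reachQ_mtop(1)] reachQ_mtop is_perm_len by simp
  have "mtop (eblock a x) = eblock a (mtop x)" using mtop_eblock lx reachQ_mtop by simp
  moreover have "last (eblock a x) \<noteq> 0" using last_eblock lx reachQ_mtop by simp
  ultimately show ?case using reachP_mtop[OF reachQ_mtop.IH[OF reachQ_mtop.prems]] by simp
next
  case (reachQ_mbot x)
  have lx: "length x = j" using reachQ_perm[OF reachQ_mbot(1)] reachQ_mbot is_perm_len by simp
  have "mbot (eblock a x) = eblock a (mbot x)" using mbot_eblock lx reachQ_mbot by simp
  then show ?case using reachP_mbot[OF reachQ_mbot.IH[OF reachQ_mbot.prems]] by simp
qed

lemma reachQ_fblock: "reachP j x \<Longrightarrow> j \<ge> 2 \<Longrightarrow> a \<ge> 1 \<Longrightarrow> reachQ (j + a) (fblock a x)"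
proof (induction rule: reachP.induct)
  case reachP_sym
  then show ?case using reachQ_iter_mtop[of "j + a" a] iter_mtop[of j a] by simp
next
  case (reachP_mbot x)
  have lx: "length x = j" using reachP_perm[OF reachP_mbot(1)] reachP_mbot is_perm_len by simp
  have "mbot (fblock a x) = fblock a (mbot x)" using mbot_fblock lx reachP_mbot by simp
  moreover have "hd (fblock a x) \<noteq> j + a - 1" using hd_fblock reachP_mbot by simp
  ultimately show ?case using reachQ_mbot[OF reachP_mbot.IH[OF reachP_mbot.prems]] by simp
next
  case (reachP_mtop x)
  have lx: "length x = j" using reachP_perm[OF reachP_mtop(1)] reachP_mtop is_perm_len by simp
  have "mtop (fblock a x) = fblock a (mtop x)" using mtop_fblock lx reachP_mtop by simp
  then show ?case using reachQ_mtop[OF reachP_mtop.IH[OF reachP_mtop.prems]] by simp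
qed

lemma hyp_reach_half: "hyp b k t \<Longrightarrow> (if b then reachP k t else reachQ k t)"
proof (induction rule: hyp.induct)
  case (hyp_sym k b) then show ?case by (simp add: reachP_sym reachQ_sym)
next
  case (hyp_E j s a) then show ?case using reachP_eblock by simp
next
  case (hyp_F j s a) then show ?case using reachQ_fblock by simp
qed

lemma hyp_reach: "hyp b k t \<Longrightarrow> red_step\<^sup>*\<^sup>* (sym_perm k) t"
  using hyp_reach_half reachP_reach reachQ_reach by (metis (full_types))

definition hypP :: "nat \<Rightarrow> nat list set" where "hypP k = {t. hyp True k t}"
definition hypQ :: "nat \<Rightarrow> nat list set" where "hypQ k = {t. hyp False k t}"

lemma hypP_eq: "k \<ge> 2 \<Longrightarrow> hypP k = insert (sym_perm k) (\<Union>j\<in>{2..<k}. eblock (k - j) ` hypQ j)"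
proof (intro set_eqI iffI)
  fix t assume k: "k \<ge> 2" and t: "t \<in> hypP k"
  then have "hyp True k t" by (simp add: hypP_def)
  then show "t \<in> insert (sym_perm k) (\<Union>j\<in>{2..<k}. eblock (k - j) ` hypQ j)"
  proof (cases rule: hyp.cases)
    case (hyp_E j s a)
    then show ?thesis by (auto simp: hypQ_def intro!: bexI[of _ j])
  qed simp_all
next
  fix t assume k: "k \<ge> 2" and t: "t \<in> insert (sym_perm k) (\<Union>j\<in>{2..<k}. eblock (k - j) ` hypQ j)"
  then show "t \<in> hypP k"
  proof (cases "t = sym_perm k")
    case True then show ?thesis using k by (simp add: hypP_def hyp.hyp_sym)
  next
    case False
    then obtain j s where j: "j \<in> {2..<k}" "s \<in> hypQ j" "t = eblock (k - j) s" using t by auto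
    then have "hyp True (j + (k - j)) (eblock (k - j) s)" by (intro hyp.hyp_E) (auto simp: hypQ_def)
    then show ?thesis using j by (simp add: hypP_def)
  qed
qed

lemma hypQ_eq: "k \<ge> 2 \<Longrightarrow> hypQ k = insert (sym_perm k) (\<Union>j\<in>{2..<k}. fblock (k - j) ` hypP j)"
proof (intro set_eqI iffI)
  fix t assume k: "k \<ge> 2" and t: "t \<in> hypQ k"
  then have "hyp False k t" by (simp add: hypQ_def)
  then show "t \<in> insert (sym_perm k) (\<Union>j\<in>{2..<k}. fblock (k - j) ` hypP j)"
  proof (cases rule: hyp.cases)
    case (hyp_F j s a)
    then show ?thesis by (auto simp: hypP_def intro!: bexI[of _ j])
  qed simp_all
next
  fix t assume k: "k \<ge> 2" and t: "t \<in> insert (sym_perm k) (\<Union>j\<in>{2..<k}. fblock (k - j) ` hypP j)"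
  then show "t \<in> hypQ k"
  proof (cases "t = sym_perm k")
    case True then show ?thesis using k by (simp add: hypQ_def hyp.hyp_sym)
  next
    case False
    then obtain j s where j: "j \<in> {2..<k}" "s \<in> hypP j" "t = fblock (k - j) s" using t by auto
    then have "hyp False (j + (k - j)) (fblock (k - j) s)" by (intro hyp.hyp_F) (auto simp: hypP_def)
    then show ?thesis using j by (simp add: hypQ_def)
  qed
qed

lemma sum_pow2_geometric: "k \<ge> 2 \<Longrightarrow> (\<Sum>j\<in>{2..<k}. (2::nat) ^ (j - 2)) = 2 ^ (k - 2) - 1"
proof (induction k rule: dec_induct)
  case base then show ?case by simp
next
  case (step k)
  have "(\<Sum>j\<in>{2..<Suc k}. (2::nat) ^ (j - 2)) = (\<Sum>j\<in>{2..<k}. 2 ^ (j - 2)) + 2 ^ (k - 2)"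
    using step(1) by simp
  also have "\<dots> = 2 ^ (k - 2) - 1 + 2 ^ (k - 2)" using step by simp
  also have "\<dots> = 2 ^ (Suc k - 2) - 1"
  proof -
    have "(1::nat) \<le> 2 ^ (k - 2)" by simp
    moreover have "Suc k - 2 = Suc (k - 2)" using step(1) by simp
    ultimately show ?thesis by simp
  qed
  finally show ?case .
qed

lemma card_insert_layers:
  fixes g :: "nat \<Rightarrow> 'a \<Rightarrow> 'b"
  assumes k: "k \<ge> 2"
    and S: "\<And>j. j \<in> {2..<k} \<Longrightarrow> finite (S j) \<and> card (S j) = 2 ^ (j - 2)"
    and uniq: "\<And>i j s s'. i \<in> {2..<k} \<Longrightarrow> j \<in> {2..<k} \<Longrightarrow> s \<in> S i \<Longrightarrow> s' \<in> S j \<Longrightarrow>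
                 g (k - i) s = g (k - j) s' \<Longrightarrow> i = j \<and> s = s'"
    and x: "x \<notin> (\<Union>j\<in>{2..<k}. g (k - j) ` S j)"
  shows "finite (insert x (\<Union>j\<in>{2..<k}. g (k - j) ` S j))
         \<and> card (insert x (\<Union>j\<in>{2..<k}. g (k - j) ` S j)) = 2 ^ (k - 2)"
proof -
  let ?U = "\<Union>j\<in>{2..<k}. g (k - j) ` S j"
  have fin: "finite ?U" using S by auto
  have "card ?U = (\<Sum>j\<in>{2..<k}. card (g (k - j) ` S j))"
  proof (rule card_UN_disjoint)
    show "\<forall>j\<in>{2..<k}. finite (g (k - j) ` S j)" using S by auto
    show "\<forall>i\<in>{2..<k}. \<forall>j\<in>{2..<k}. i \<noteq> j \<longrightarrow> g (k - i) ` S i \<inter> g (k - j) ` S j = {}"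
      using uniq by blast
  qed simp
  also have "\<dots> = (\<Sum>j\<in>{2..<k}. card (S j))"
  proof (rule sum.cong)
    fix j assume "j \<in> {2..<k}"
    then have "inj_on (g (k - j)) (S j)" using uniq by (meson inj_onI)
    then show "card (g (k - j) ` S j) = card (S j)" by (rule card_image)
  qed simp
  also have "\<dots> = 2 ^ (k - 2) - 1" using S sum_pow2_geometric[OF k] by simp
  finally show ?thesis using fin x by simp
qed

lemma card_halves:
  "k \<ge> 2 \<Longrightarrow> finite (hypP k) \<and> finite (hypQ k) \<and> card (hypP k) = 2 ^ (k - 2) \<and> card (hypQ k) = 2 ^ (k - 2)"
proof (induction k rule: less_induct)
  case (less k)
  have IH: "\<And>j. j \<in> {2..<k} \<Longrightarrow>
      finite (hypP j) \<and> finite (hypQ j) \<and> card (hypP j) = 2 ^ (j - 2) \<and> card (hypQ j) = 2 ^ (j - 2)"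
    using less.IH by auto
  have P: "finite (hypP k) \<and> card (hypP k) = 2 ^ (k - 2)"
    unfolding hypP_eq[OF less.prems]
  proof (rule card_insert_layers[OF less.prems])
    show "finite (hypQ j) \<and> card (hypQ j) = 2 ^ (j - 2)" if "j \<in> {2..<k}" for j using IH[OF that] by simp
    show "i = j \<and> s = s'" if "i \<in> {2..<k}" "j \<in> {2..<k}" "s \<in> hypQ i" "s' \<in> hypQ j"
      and "eblock (k - i) s = eblock (k - j) s'" for i j s s'
    proof -
      have "k - i = k - j \<and> s = s'"
        using that by (intro eblock_eq_hyp[of "k - i" s "k - j" s' False i False j]) (auto simp: hypQ_def)
      then show ?thesis using that(1,2) by auto
    qed
    show "sym_perm k \<notin> (\<Union>j\<in>{2..<k}. eblock (k - j) ` hypQ j)"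
    proof
      assume "sym_perm k \<in> (\<Union>j\<in>{2..<k}. eblock (k - j) ` hypQ j)"
      then obtain j s where j: "j \<in> {2..<k}" and e: "sym_perm k = eblock (k - j) s" by auto
      have "1 \<le> k - j" "k - j + 2 \<le> k" using j by auto
      then show False using eblock_ne_sym_perm[of "k - j" k s] e by simp
    qed
  qed
  have Q: "finite (hypQ k) \<and> card (hypQ k) = 2 ^ (k - 2)"
    unfolding hypQ_eq[OF less.prems]
  proof (rule card_insert_layers[OF less.prems])
    show "finite (hypP j) \<and> card (hypP j) = 2 ^ (j - 2)" if "j \<in> {2..<k}" for j using IH[OF that] by simp
    show "i = j \<and> s = s'" if "i \<in> {2..<k}" "j \<in> {2..<k}" "s \<in> hypP i" "s' \<in> hypP j"
      and "fblock (k - i) s = fblock (k - j) s'" for i j s s'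
    proof -
      have "k - i = k - j \<and> s = s'" using that by (intro fblock_eq_fblock) auto
      then show ?thesis using that(1,2) by auto
    qed
    show "sym_perm k \<notin> (\<Union>j\<in>{2..<k}. fblock (k - j) ` hypP j)"
    proof
      assume "sym_perm k \<in> (\<Union>j\<in>{2..<k}. fblock (k - j) ` hypP j)"
      then obtain j s where j: "j \<in> {2..<k}" and e: "sym_perm k = fblock (k - j) s" by auto
      have "1 \<le> k - j" "k - j + 2 \<le> k" using j by auto
      then show False using fblock_ne_sym_perm[of "k - j" k s] e by simp
    qed
  qed
  show ?case using P Q by simp
qed

lemma hypP_inter_hypQ: "k \<ge> 2 \<Longrightarrow> hypP k \<inter> hypQ k = {sym_perm k}"
proof (intro set_eqI iffI)
  fix t assume k: "k \<ge> 2" and t: "t \<in> hypP k \<inter> hypQ k"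
  then have p: "hyp True k t" and q: "hyp False k t" by (auto simp: hypP_def hypQ_def)
  show "t \<in> {sym_perm k}"
  proof (rule ccontr)
    assume ne: "t \<notin> {sym_perm k}"
    from p ne obtain j s a where "t = eblock a s" "hyp False j s" "a \<ge> 1"
      by (cases rule: hyp.cases) auto
    moreover from q ne obtain c u where "t = fblock c u" "c \<ge> 1"
      by (cases rule: hyp.cases) auto
    ultimately show False using eblock_fblock_hyp by blast
  qed
next
  fix t assume "k \<ge> 2" "t \<in> {sym_perm k}"
  then show "t \<in> hypP k \<inter> hypQ k" by (auto simp: hypP_def hypQ_def hyp.hyp_sym)
qed

lemma card_hyp_class: "k \<ge> 2 \<Longrightarrow> card (hypP k \<union> hypQ k) = 2 ^ (k - 1) - 1"
proof -
  assume k: "k \<ge> 2"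
  have c: "card (hypP k \<union> hypQ k) + card (hypP k \<inter> hypQ k) = card (hypP k) + card (hypQ k)"
    using card_Un_Int[of "hypP k" "hypQ k"] card_halves[OF k] by simp
  have "2 ^ (k - 1) = 2 * (2::nat) ^ (k - 2)"
  proof -
    obtain i where "k = i + 2" using k by (metis add.commute le_add_diff_inverse)
    then show ?thesis by simp
  qed
  then show ?thesis using c card_halves[OF k] hypP_inter_hypQ[OF k] by simp
qed


section \<open>The rotation cycle\<close>

text \<open>On permutations with maximal first top entry the bottom move acts as the right
rotation of the remaining entries.  The lists zperm n and fblock i (wperm (n - i)),
i = 0..n-2, form one orbit of this rotation (cyc n).\<close>

definition wperm :: "nat \<Rightarrow> nat list" where "wperm m = (m - 1) # 0 # rev [1..<m-1]"

definition zperm :: "nat \<Rightarrow> nat list" where "zperm m = 0 # rev [1..<m-1] @ [m - 1]"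

definition rotr :: "nat list \<Rightarrow> nat list" where "rotr u = last u # butlast u"

lemma wperm_eblock: "m \<ge> 3 \<Longrightarrow> wperm m = eblock 1 (sym_perm (m - 1))"
proof -
  assume m: "m \<ge> 3"
  define p where "p = m - 3"
  have mp: "m = p + 3" using m p_def by simp
  show ?thesis using map_plus_sym_perm[of 1 "p + 1"]
    by (simp add: mp wperm_def eblock_def hd_sym_perm tl_sym_perm)
qed

lemma wperm_2: "wperm 2 = sym_perm 2" by (simp add: wperm_def sym_perm_def numeral_2_eq_2)

lemma last_wperm: "m \<ge> 3 \<Longrightarrow> last (wperm m) = 1"
  by (simp add: wperm_def last_rev)

lemma hd_wperm: "hd (wperm k) = k - 1" by (simp add: wperm_def)

lemma last_zperm: "last (zperm k) = k - 1" by (simp add: zperm_def)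

lemma hd_zperm: "hd (zperm k) = 0" by (simp add: zperm_def)

lemma is_perm_wperm: "m \<ge> 2 \<Longrightarrow> is_perm m (wperm m)"
proof -
  assume m: "m \<ge> 2"
  show ?thesis
  proof (cases "m = 2")
    case True then show ?thesis using wperm_2 is_perm_sym_perm by simp
  next
    case False
    then have "m \<ge> 3" using m by simp
    then show ?thesis using wperm_eblock is_perm_eblock[OF is_perm_sym_perm, of "m - 1" 1] by simp
  qed
qed

lemma is_perm_zperm: assumes "k \<ge> 2" shows "is_perm k (zperm k)"
proof -
  have "set (zperm k) = {0..<k}" using assms by (auto simp: zperm_def)
  moreover have "distinct (zperm k)" using assms by (auto simp: zperm_def)
  ultimately show ?thesis by (simp add: is_perm_def)
qed

lemma rotr_fblock_wperm: assumes "m \<ge> 3" shows "rotr (fblock i (wperm m)) = fblock (i + 1) (wperm (m - 1))"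
proof -
  define p where "p = m - 3"
  have mp: "m = p + 3" using assms p_def by simp
  have r1: "rev [1..<p + 2] = rev [Suc (Suc 0)..<p + 2] @ [1]" by (simp add: upt_conv_Cons)
  have "fblock i (wperm m) = rev [1..<i+1] @ (p + 2 + i) # 0 # (rev [Suc (Suc i)..<p + 2 + i] @ [1 + i])"
    using r1 by (simp add: mp fblock_def wperm_def fshift_def map_fshift_rev_upt add.commute add.left_commute)
  then have "rotr (fblock i (wperm m)) = (1 + i) # rev [1..<i+1] @ (p + 2 + i) # 0 # rev [Suc (Suc i)..<p + 2 + i]"
    by (simp add: rotr_def butlast_append)
  moreover have "fblock (i + 1) (wperm (m - 1)) = rev [1..<i+2] @ (p + 2 + i) # 0 # rev [Suc (Suc i)..<p + 2 + i]"
    by (simp add: mp fblock_def wperm_def fshift_def map_fshift_rev_upt add.commute add.left_commute)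
  ultimately show ?thesis by simp
qed

lemma rotr_fblock_sym2: "rotr (fblock i (sym_perm 2)) = zperm (i + 2)"
  by (simp add: rotr_def fblock_def sym_perm_def zperm_def fshift_def butlast_append numeral_2_eq_2)

lemma rotr_zperm: "k \<ge> 2 \<Longrightarrow> rotr (zperm k) = wperm k"
  by (simp add: rotr_def zperm_def wperm_def butlast_append)

definition wave :: "nat \<Rightarrow> nat list set" where "wave n = (\<lambda>i. fblock i (wperm (n - i))) ` {0..n-2}"

definition cyc :: "nat \<Rightarrow> nat list set" where "cyc n = insert (zperm n) (wave n)"

lemma wave_memI: "i + 2 \<le> n \<Longrightarrow> fblock i (wperm (n - i)) \<in> wave n"
  unfolding wave_def by (rule image_eqI[of _ _ i]) auto

lemma u0_wave: "n \<ge> 3 \<Longrightarrow> fblock (n - 2) (sym_perm 2) \<in> wave n"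
  unfolding wave_def using wperm_2 by (intro image_eqI[of _ _ "n - 2"]) auto

lemma last_u0: "last (fblock a (sym_perm 2)) = 0" by (simp add: fblock_def fshift_def sym_perm_def numeral_2_eq_2)

lemma wave_is_perm: "n \<ge> 3 \<Longrightarrow> u \<in> wave n \<Longrightarrow> is_perm n u"
proof -
  assume n: "n \<ge> 3" and u: "u \<in> wave n"
  then obtain i where i: "i \<le> n - 2" "u = fblock i (wperm (n - i))" by (auto simp: wave_def)
  have "is_perm (n - i) (wperm (n - i))" using i n by (intro is_perm_wperm) auto
  then have "is_perm ((n - i) + i) (fblock i (wperm (n - i)))" using i n by (intro is_perm_fblock) auto
  then show ?thesis using i n by simp
qed

lemma cyc_is_perm: "n \<ge> 3 \<Longrightarrow> u \<in> cyc n \<Longrightarrow> is_perm n u"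
  using wave_is_perm is_perm_zperm by (auto simp: cyc_def)

lemma cyc_rotr: "n \<ge> 3 \<Longrightarrow> u \<in> cyc n \<Longrightarrow> rotr u \<in> cyc n"
proof -
  assume n: "n \<ge> 3" and u: "u \<in> cyc n"
  show ?thesis
  proof (cases "u = zperm n")
    case True
    have "wperm n = fblock 0 (wperm (n - 0))" by simp
    then have "wperm n \<in> wave n" unfolding wave_def by (intro image_eqI[of _ _ 0]) auto
    then show ?thesis using True rotr_zperm n by (simp add: cyc_def)
  next
    case False
    then obtain i where i: "i \<le> n - 2" "u = fblock i (wperm (n - i))" using u by (auto simp: cyc_def wave_def)
    show ?thesis
    proof (cases "i = n - 2")
      case True
      then have "u = fblock i (sym_perm 2)" using i n wperm_2 by (simp add: numeral_2_eq_2)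
      then have "rotr u = zperm (i + 2)" using rotr_fblock_sym2 by simp
      moreover have "i + 2 = n" using True n by simp
      ultimately show ?thesis by (simp add: cyc_def)
    next
      case False
      then have r: "rotr u = fblock (i + 1) (wperm (n - i - 1))" using i n rotr_fblock_wperm[of "n - i" i] by simp
      have "fblock (i + 1) (wperm (n - i - 1)) \<in> wave n" unfolding wave_def
        using False i by (intro image_eqI[of _ _ "i + 1"]) auto
      then show ?thesis using r by (simp add: cyc_def)
    qed
  qed
qed

lemma hd_wave: "n \<ge> 3 \<Longrightarrow> i \<le> n - 2 \<Longrightarrow> hd (fblock i (wperm (n - i))) = (if i = 0 then n - 1 else i)"
  by (auto simp: hd_fblock hd_wperm)

lemma card_cyc: assumes "n \<ge> 3" shows "card (cyc n) = n"
proof -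
  have inj: "inj_on (\<lambda>i. fblock i (wperm (n - i))) {0..n-2}"
  proof (rule inj_onI)
    fix i j assume ij: "i \<in> {0..n-2}" "j \<in> {0..n-2}" "fblock i (wperm (n - i)) = fblock j (wperm (n - j))"
    then have "(if i = 0 then n - 1 else i) = (if j = 0 then n - 1 else j)"
      using hd_wave[OF assms] by (metis atLeastAtMost_iff)
    then show "i = j" using ij assms by (auto split: if_splits)
  qed
  have cW: "card (wave n) = n - 1" unfolding wave_def using card_image[OF inj] assms by simp
  have "zperm n \<notin> wave n"
  proof
    assume "zperm n \<in> wave n"
    then obtain i where i: "i \<le> n - 2" "zperm n = fblock i (wperm (n - i))" by (auto simp: wave_def)
    then have "0 = (if i = 0 then n - 1 else i)" using hd_wave[OF assms] hd_zperm by metis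
    then show False using assms by (auto split: if_splits)
  qed
  moreover have "finite (wave n)" by (simp add: wave_def)
  ultimately show ?thesis using cW assms by (simp add: cyc_def)
qed


section \<open>Adding a first letter\<close>

text \<open>mark h t is the permutation on one more letter whose first top letter has bottom
position h, the other letters keeping the relative order given by t.\<close>

definition mark :: "nat \<Rightarrow> nat list \<Rightarrow> nat list" where
  "mark h t = h # map (\<lambda>w. if h \<le> w then w + 1 else w) t"

lemma mark_top: "is_perm n u \<Longrightarrow> mark n u = n # u"
  unfolding mark_def by (auto intro!: map_idI dest: is_perm_lt)

lemma mark_inj: "mark h t = mark h' t' \<Longrightarrow> h = h' \<and> t = t'"
proof -
  assume e: "mark h t = mark h' t'"
  then have hh: "h = h'" by (simp add: mark_def)
  have "inj (\<lambda>w::nat. if h \<le> w then w + 1 else w)" by (auto simp: inj_def split: if_splits)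
  then show ?thesis using e hh by (simp add: mark_def inj_map_eq_map)
qed

lemma mtop_mark:
  assumes "is_perm n t" "n \<ge> 1" "h < n"
  shows "mtop (mark h t) = mark (h + (if last t < h then 1 else 0)) (mtop t)"
proof -
  have len: "length t = n" using is_perm_len[OF assms(1)] .
  have ne: "t \<noteq> []" using len assms by auto
  have xl: "last t < n" using is_perm_lt[OF assms(1)] ne by auto
  let ?sh = "\<lambda>w::nat. if h \<le> w then w + 1 else w"
  have ls: "last (mark h t) = ?sh (last t)" using ne by (simp add: mark_def last_map)
  have lens: "length (mark h t) - 1 = n" using len by (simp add: mark_def)
  show ?thesis
  proof (cases "last t = n - 1")
    case True
    then have "last (mark h t) = n" using ls assms by auto
    moreover have "\<not> last t < h" using True assms by simp
    ultimately show ?thesis using True lens len assms by (simp add: mtop_def)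
  next
    case False
    let ?x = "last t"
    have xn: "?x < n - 1" using False xl by simp
    have lsn: "last (mark h t) \<noteq> n" using ls xn by auto
    have "mtop (mark h t) = map (top_shift n (?sh ?x)) (mark h t)" using lsn lens ls by (simp add: mtop_def)
    also have "\<dots> = mark (h + (if ?x < h then 1 else 0)) (map (top_shift (n - 1) ?x) t)"
    proof -
      have hd: "top_shift n (?sh ?x) h = h + (if ?x < h then 1 else 0)" using assms xn by (auto simp: top_shift_def)
      have tl: "map (top_shift n (?sh ?x) \<circ> ?sh) t =
          map ((\<lambda>w. if h + (if ?x < h then 1 else 0) \<le> w then w + 1 else w) \<circ> top_shift (n - 1) ?x) t"
        using assms xn by (intro map_cong) (auto simp: top_shift_def dest: is_perm_lt)
      show ?thesis using hd tl by (simp add: mark_def)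
    qed
    also have "map (top_shift (n - 1) ?x) t = mtop t" using False len by (simp add: mtop_def)
    finally show ?thesis .
  qed
qed

lemma mtop_mark_top:
  assumes "is_perm n u" "n \<ge> 1"
  shows "mtop (mark n u) = mark (last u + 1) u"
proof -
  have len: "length u = n" using is_perm_len[OF assms(1)] .
  have ne: "u \<noteq> []" using len assms by auto
  have xl: "last u < n" using is_perm_lt[OF assms(1)] ne by auto
  have "mtop (n # u) = map (top_shift n (last u)) (n # u)" using ne xl len by (simp add: mtop_def)
  also have "\<dots> = mark (last u + 1) u"
    using xl by (auto simp: mark_def top_shift_def intro!: map_cong dest: is_perm_lt[OF assms(1)])
  finally show ?thesis using mark_top[OF assms(1)] by simp
qed

lemma mbot_mark:
  assumes "is_perm n t" "n \<ge> 2" "h < n"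
  shows "mbot (mark h t) = mark h (mbot t)"
proof -
  have len: "length t = n" using is_perm_len[OF assms(1)] .
  have ne: "t \<noteq> []" using len assms by auto
  define sh where "sh = (\<lambda>w::nat. if h \<le> w then w + 1 else w)"
  have ins: "mark h x = h # map sh x" for x by (simp add: mark_def sh_def)
  have inj: "inj sh" by (auto simp: inj_def sh_def split: if_splits)
  have shn: "sh (n - 1) = n" using assms by (simp add: sh_def)
  have "mbot (mark h t) = move_last_after n ([h] @ map sh t)" using len by (simp add: mbot_def ins)
  also have "\<dots> = [h] @ move_last_after n (map sh t)" using assms ne by (intro move_last_after_append) (auto simp: sh_def)
  also have "move_last_after n (map sh t) = map sh (move_last_after (n - 1) t)"
  proof -
    have "inj_on sh (insert (n - 1) (set t))" using inj by (rule inj_on_subset) simp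
    from move_last_after_map[OF this] shn show ?thesis by simp
  qed
  finally show ?thesis using len by (simp add: ins mbot_def)
qed

lemma mbot_mark_top:
  assumes "is_perm n u" "n \<ge> 2"
  shows "mbot (mark n u) = mark n (rotr u)"
proof -
  have len: "length u = n" using is_perm_len[OF assms(1)] .
  have ne: "u \<noteq> []" using len assms by auto
  have u: "u = butlast u @ [last u]" using ne by simp
  have nb: "n \<notin> set (butlast u)" using is_perm_lt[OF assms(1)] by (meson in_set_butlastD less_irrefl)
  have nl: "n \<noteq> last u" using is_perm_lt[OF assms(1)] ne by (metis last_in_set less_irrefl)
  have "mbot (n # u) = move_last_after n ([] @ n # butlast u @ [last u])" using len u
    by (simp add: mbot_def)
  also have "\<dots> = [] @ n # last u # butlast u" using nb nl by (intro move_last_after_split) auto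
  finally have "mbot (n # u) = n # rotr u" by (simp add: rotr_def)
  moreover have "is_perm n (rotr u)" using assms(1) ne u unfolding is_perm_def rotr_def
    by (metis distinct.simps(2) distinct1_rotate rotate1.simps(2) set_rotate1 list.set(2) Un_insert_right set_append append_Nil2)
  ultimately show ?thesis using mark_top assms(1) by simp
qed


section \<open>Markers\<close>

text \<open>marked b k t h: t lies in the half hyp b k of the hyperelliptic class and h is
its marker, the unique first entry with which t occurs in the orbit of
reduced (pi_n k).\<close>

inductive marked :: "bool \<Rightarrow> nat \<Rightarrow> nat list \<Rightarrow> nat \<Rightarrow> bool" where
  marked_sym: "k \<ge> 3 \<Longrightarrow> marked b k (sym_perm k) 2"
| marked_E2: "hyp False j s \<Longrightarrow> j \<ge> 2 \<Longrightarrow> a \<ge> 2 \<Longrightarrow> marked True (j + a) (eblock a s) 2"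
| marked_E1_sym: "j \<ge> 2 \<Longrightarrow> marked True (j + 1) (eblock 1 (sym_perm j)) 2"
| marked_E1_F: "hyp True j u \<Longrightarrow> j \<ge> 2 \<Longrightarrow> c \<ge> 1 \<Longrightarrow> marked True (j + c + 1) (eblock 1 (fblock c u)) (c + 2)"
| marked_F: "marked True j t h \<Longrightarrow> a \<ge> 1 \<Longrightarrow> marked False (j + a) (fblock a t) (h + a)"
| marked_F_sym: "a \<ge> 1 \<Longrightarrow> marked False (a + 2) (fblock a (sym_perm 2)) 1"

lemma marked_basic: "marked b k t h \<Longrightarrow> hyp b k t \<and> k \<ge> 3 \<and> 1 \<le> h \<and> h < k"
proof (induction rule: marked.induct)
  case (marked_sym k b) then show ?case by (simp add: hyp.hyp_sym)
next
  case (marked_E2 j s a) then show ?case by (simp add: hyp.hyp_E)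
next
  case (marked_E1_sym j)
  have "hyp True (j + 1) (eblock 1 (sym_perm j))" using marked_E1_sym by (intro hyp.hyp_E hyp.hyp_sym) auto
  then show ?case using marked_E1_sym by simp
next
  case (marked_E1_F j u c)
  have "hyp False (j + c) (fblock c u)" using marked_E1_F by (intro hyp.hyp_F) auto
  then have "hyp True (j + c + 1) (eblock 1 (fblock c u))" using marked_E1_F by (intro hyp.hyp_E) auto
  then show ?case using marked_E1_F by simp
next
  case (marked_F j t h a)
  then show ?case by (simp add: hyp.hyp_F)
next
  case (marked_F_sym a)
  have "hyp False (2 + a) (fblock a (sym_perm 2))" using marked_F_sym by (intro hyp.hyp_F hyp.hyp_sym) auto
  then show ?case using marked_F_sym by (simp add: add.commute)
qed

lemma marked_is_perm: "marked b n t h \<Longrightarrow> is_perm n t \<and> h < n \<and> n \<ge> 3"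
  using marked_basic hyp_basic by blast

lemma marked_total: "hyp b k t \<Longrightarrow> k \<ge> 3 \<Longrightarrow> \<exists>h. marked b k t h"
proof (induction rule: hyp.induct)
  case (hyp_sym k b) then show ?case using marked.marked_sym by blast
next
  case (hyp_E j s a)
  show ?case
  proof (cases "a \<ge> 2")
    case True then show ?thesis using hyp_E marked.marked_E2 by blast
  next
    case False
    then have a1: "a = 1" using hyp_E by simp
    from hyp_E(1) show ?thesis
    proof (cases rule: hyp.cases)
      case (hyp_sym) then show ?thesis using a1 hyp_E marked.marked_E1_sym by blast
    next
      case (hyp_F j' u c)
      then have "marked True (j' + c + 1) (eblock 1 (fblock c u)) (c + 2)" by (intro marked.marked_E1_F) auto
      then show ?thesis using a1 hyp_F by auto
    qed simp
  qed
next
  case (hyp_F j s a)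
  show ?case
  proof (cases "j \<ge> 3")
    case True
    then obtain h where "marked True j s h" using hyp_F by blast
    then show ?thesis using hyp_F marked.marked_F by blast
  next
    case False
    then have "j = 2" using hyp_F by simp
    then have "s = sym_perm 2" using hyp_F hyp_True_2 by simp
    then show ?thesis using \<open>j = 2\<close> marked.marked_F_sym[OF hyp_F.hyps(3)] by (auto simp: add.commute)
  qed
qed

text \<open>The marker is determined by the shape of t: this is read off from the last rule
of a derivation, using that the insertions are injective with disjoint images.\<close>

lemma marked_sym_marker: assumes "marked b k (sym_perm k) h" shows "h = 2"
  using assms
proof (cases rule: marked.cases)
  case (marked_E2 j s a) then show ?thesis using eblock_ne_sym_perm[of a k s] by simp
next
  case (marked_E1_sym j) then show ?thesis using eblock_ne_sym_perm[of 1 k "sym_perm j"] by simp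
next
  case (marked_E1_F j u c) then show ?thesis using eblock_ne_sym_perm[of 1 k "fblock c u"] by simp
next
  case (marked_F j t h' a)
  then have f: "marked True j t h'" "k = j + a" "sym_perm k = fblock a t" "1 \<le> a" by auto
  then show ?thesis using marked_basic[OF f(1)] fblock_ne_sym_perm[of a k t] by simp
next
  case (marked_F_sym a) then show ?thesis using fblock_ne_sym_perm[of a k "sym_perm 2"] by simp
qed simp

lemma marked_eblock_inv:
  assumes m: "marked b k (eblock a s) h" and s: "hyp False j s" and a: "a \<ge> 1"
  shows "h = (if a = 1 \<and> s \<noteq> sym_perm j then hd s + 2 else 2)"
  using m
proof (cases rule: marked.cases)
  case marked_sym
  have j: "length s = j" "j \<ge> 2" using hyp_len[OF s] hyp_basic[OF s] by auto
  then have "s \<noteq> []" by auto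
  then have "length (eblock a s) = j + a" using len_eblock[of s a] j by simp
  then have "k = j + a" using marked_sym len_sym_perm by metis
  then show ?thesis using marked_sym eblock_ne_sym_perm[of a k s] a j by simp
next
  case (marked_E2 j' s' a')
  then show ?thesis using eblock_eq_hyp[of a s a' s' False j False j'] s a by auto
next
  case (marked_E1_sym j')
  then have "a = 1" "s = sym_perm j'"
    using eblock_eq_hyp[of a s 1 "sym_perm j'" False j False j'] s a hyp.hyp_sym by auto
  moreover have "j' = j" using hyp_len[OF s] \<open>s = sym_perm j'\<close> by simp
  ultimately show ?thesis using marked_E1_sym by simp
next
  case (marked_E1_F j' u c)
  have "hyp False (j' + c) (fblock c u)" using marked_E1_F hyp.hyp_F by simp
  then have "a = 1" "s = fblock c u"
    using eblock_eq_hyp[of a s 1 "fblock c u" False j False "j' + c"] marked_E1_F s a by auto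
  moreover have "length u \<ge> 2" using marked_E1_F hyp_len hyp_basic by metis
  then have "fblock c u \<noteq> sym_perm j" using sym_perm_ne_fblock[of c u j] marked_E1_F by auto
  ultimately show ?thesis using marked_E1_F hd_fblock by auto
next
  case (marked_F j' t' h' a')
  then show ?thesis using eblock_fblock_hyp[OF s a, of a' t'] by simp
next
  case (marked_F_sym a')
  then show ?thesis using eblock_fblock_hyp[OF s a, of a' "sym_perm 2"] by simp
qed

lemma marked_fblock_inv:
  assumes m: "marked b k (fblock a t) h" and t: "hyp True j t" and a: "a \<ge> 1"
  shows "if t = sym_perm 2 then h = 1 else \<exists>h'. marked True j t h' \<and> h = h' + a"
  using m
proof (cases rule: marked.cases)
  case marked_sym
  have j: "length t = j" "j \<ge> 2" using hyp_len[OF t] hyp_basic[OF t] by auto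
  then have "k = j + a" using marked_sym len_sym_perm len_fblock by metis
  then show ?thesis using marked_sym fblock_ne_sym_perm[of a k t] a j by simp
next
  case (marked_E2 j' s' a')
  then show ?thesis using eblock_fblock_hyp[of False j' s' a' a t] a by simp
next
  case (marked_E1_sym j')
  then show ?thesis using eblock_fblock_hyp[of False j' "sym_perm j'" 1 a t] hyp.hyp_sym a by simp
next
  case (marked_E1_F j' u c)
  then show ?thesis using eblock_fblock_hyp[of False "j' + c" "fblock c u" 1 a t] hyp.hyp_F a by simp
next
  case (marked_F j' t' h' a')
  then have same: "a' = a" "t' = t" using fblock_eq_fblock a by metis+
  then have mk: "marked True j' t h'" using marked_F by simp
  then have "j' = j" "j \<ge> 3" using marked_basic[OF mk] hyp_len[OF t] hyp_len by auto
  then show ?thesis using marked_F mk same hyp_len[OF t] by auto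
next
  case (marked_F_sym a')
  then show ?thesis using fblock_eq_fblock a by metis
qed

lemma marked_fun: "marked b k t h \<Longrightarrow> marked b' k t h' \<Longrightarrow> h = h'"
proof (induction arbitrary: b' h' rule: marked.induct)
  case (marked_sym k b) then show ?case using marked_sym_marker by metis
next
  case (marked_E2 j s a) then show ?case using marked_eblock_inv by fastforce
next
  case (marked_E1_sym j) then show ?case using marked_eblock_inv hyp.hyp_sym by fastforce
next
  case (marked_E1_F j u c)
  have "hyp False (j + c) (fblock c u)" using marked_E1_F hyp.hyp_F by simp
  moreover have "sym_perm (j + c) \<noteq> fblock c u"
    using marked_E1_F sym_perm_ne_fblock hyp_len by simp
  ultimately show ?case using marked_eblock_inv[OF marked_E1_F.prems] hd_fblock marked_E1_F by auto
next
  case (marked_F j t h a)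
  have t: "hyp True j t" "j \<ge> 3" using marked_basic[OF marked_F.hyps(1)] by auto
  then have "t \<noteq> sym_perm 2" using hyp_len by fastforce
  then obtain h'' where "marked True j t h''" "h' = h'' + a"
    using marked_fblock_inv[OF marked_F.prems t(1) marked_F.hyps(2)] by auto
  then show ?case using marked_F.IH by auto
next
  case (marked_F_sym a)
  then show ?case using marked_fblock_inv[OF marked_F_sym.prems, of 2] hyp.hyp_sym by simp
qed

lemma marked_mbot_eblock:
  assumes s: "hyp False j s" and j: "j \<ge> 2" and a: "a \<ge> 2"
  shows "marked True (j + a) (mbot (eblock a s)) 2"
proof (cases "s = sym_perm j")
  case s_sym: True
  show ?thesis
  proof (cases "j = 2")
    case True
    then show ?thesis
      using mbot_eblock_sym[of 2 a] s_sym marked.marked_sym[of "a + 2" True] a by (simp add: add.commute)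
  next
    case False
    have "marked True ((j - 1) + (a + 1)) (eblock (a + 1) (sym_perm (j - 1))) 2"
      using j a False by (intro marked.marked_E2 hyp.hyp_sym) auto
    then show ?thesis using mbot_eblock_sym[of j a] False j s_sym by simp
  qed
next
  case False
  have ls: "length s = j" using s hyp_len by blast
  have "hd s \<noteq> length s - 1" using hyp_False_hd[OF s False] ls by simp
  then have "mbot (eblock a s) = eblock a (mbot s)" using mbot_eblock ls j by simp
  moreover have "hyp False j (mbot s)" using hyp_closed[OF s] False by simp
  ultimately show ?thesis using marked.marked_E2 j a by simp
qed

lemma marked_mbot_eblock_sym:
  assumes "j \<ge> 2"
  shows "marked True (j + 1) (mbot (eblock 1 (sym_perm j))) 2"
proof (cases "j = 2")
  case True
  then show ?thesis using mbot_eblock_sym[of 2 1] marked.marked_sym[of 3 True] by (simp add: numeral_3_eq_3)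
next
  case False
  have "marked True ((j - 1) + 2) (eblock 2 (sym_perm (j - 1))) 2"
    using assms False by (intro marked.marked_E2 hyp.hyp_sym) auto
  then show ?thesis using mbot_eblock_sym[of j 1] False assms by (simp add: numeral_2_eq_2)
qed

lemma marked_mbot: "marked b k t h \<Longrightarrow> b \<or> t \<noteq> sym_perm k \<Longrightarrow> marked b k (mbot t) h"
proof (induction rule: marked.induct)
  case (marked_sym k b)
  have "marked True ((k - 1) + 1) (eblock 1 (sym_perm (k - 1))) 2"
    using marked_sym by (intro marked.marked_E1_sym) auto
  then show ?case using mbot_sym_perm[of k] marked_sym by simp
next
  case (marked_E2 j s a) then show ?case using marked_mbot_eblock by simp
next
  case (marked_E1_sym j) then show ?case using marked_mbot_eblock_sym by simp
next
  case (marked_E1_F j u c)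
  have lu: "length u = j" using marked_E1_F(1) hyp_len by blast
  have "hd (fblock c u) \<noteq> length (fblock c u) - 1" "length (fblock c u) \<ge> 2"
    using marked_E1_F lu hd_fblock by auto
  then have "mbot (eblock 1 (fblock c u)) = eblock 1 (mbot (fblock c u))" using mbot_eblock by blast
  also have "mbot (fblock c u) = fblock c (mbot u)" using mbot_fblock lu marked_E1_F by simp
  finally have e: "mbot (eblock 1 (fblock c u)) = eblock 1 (fblock c (mbot u))" .
  have "hyp True j (mbot u)" using hyp_closed[OF marked_E1_F(1)] by simp
  then show ?case using e marked.marked_E1_F marked_E1_F by simp
next
  case (marked_F j t h a)
  have lt: "length t = j" "j \<ge> 3" using marked_basic[OF marked_F(1)] hyp_len by auto
  have "marked True j (mbot t) h" using marked_F by simp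
  then show ?case using mbot_fblock[of t a] lt marked.marked_F marked_F by simp
next
  case (marked_F_sym a)
  have "mbot (fblock a (sym_perm 2)) = fblock a (sym_perm 2)"
    using mbot_fblock[of "sym_perm 2" a] mbot_sym_perm[of 2] by simp
  then show ?case using marked.marked_F_sym marked_F_sym by simp
qed

lemma marked_mbot_any:
  assumes "marked b n t h"
  shows "\<exists>b'. marked b' n (mbot t) h"
proof (cases "b \<or> t \<noteq> sym_perm n")
  case True then show ?thesis using marked_mbot[OF assms] by blast
next
  case False
  then have "marked True n t h"
    using assms marked_sym_marker[of b n h] marked.marked_sym marked_is_perm by auto
  then show ?thesis using marked_mbot by blast
qed

text \<open>Under the top move the mark moves to h + [last t < h]: either the result is again
a marker, or it becomes maximal and mtop t lies on the rotation cycle.\<close>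

definition top_succ :: "bool \<Rightarrow> nat \<Rightarrow> nat list \<Rightarrow> nat \<Rightarrow> bool" where
  "top_succ b k t h \<longleftrightarrow>
    (h + (if last t < h then 1 else 0) < k \<and> marked b k (mtop t) (h + (if last t < h then 1 else 0))) \<or>
    (h + (if last t < h then 1 else 0) = k \<and>
      (if b then mtop t = wperm k else (\<exists>i. 1 \<le> i \<and> i + 2 \<le> k \<and> mtop t = fblock i (wperm (k - i)))))"

lemma top_succ_sym: "k \<ge> 3 \<Longrightarrow> top_succ False k (sym_perm k) 2"
proof -
  assume k: "k \<ge> 3"
  have mtop: "mtop (sym_perm k) = fblock 1 (sym_perm (k - 1))" using mtop_sym_perm[of k] k by simp
  have l: "last (sym_perm k) = 0" using k last_sym_perm by simp
  show ?thesis
  proof (cases "k = 3")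
    case True
    have "mtop (sym_perm k) = fblock 1 (wperm (k - 1))" using mtop True wperm_2 by simp
    then show ?thesis using l True unfolding top_succ_def by (intro disjI2) auto
  next
    case False
    have "marked False ((k - 1) + 1) (fblock 1 (sym_perm (k - 1))) (2 + 1)"
      using k False by (intro marked.marked_F marked.marked_sym) auto
    then show ?thesis using l mtop k False unfolding top_succ_def by auto
  qed
qed

lemma top_succ_eblock:
  assumes s: "hyp False j s" and j: "j \<ge> 2" and a: "a \<ge> 2"
  shows "top_succ True (j + a) (eblock a s) 2"
proof -
  have ls: "length s = j" using s hyp_len by blast
  have mtop: "mtop (eblock a s) = eblock a (mtop s)" using mtop_eblock ls j by simp
  have l: "last (eblock a s) = last s + a" using last_eblock ls j by simp
  have "hyp False j (mtop s)" using hyp_closed[OF s] by simp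
  then have "marked True (j + a) (eblock a (mtop s)) 2" using marked.marked_E2 j a by simp
  then show ?thesis using mtop l a s j unfolding top_succ_def by auto
qed

lemma top_succ_eblock_sym:
  assumes j: "j \<ge> 2"
  shows "top_succ True (j + 1) (eblock 1 (sym_perm j)) 2"
proof -
  have mtop: "mtop (eblock 1 (sym_perm j)) = eblock 1 (mtop (sym_perm j))"
    using mtop_eblock[of "sym_perm j" 1] j by simp
  have l: "last (eblock 1 (sym_perm j)) = 1"
    using last_eblock[of "sym_perm j" 1] last_sym_perm j by simp
  show ?thesis
  proof (cases "j = 2")
    case True
    have "mtop (eblock 1 (sym_perm j)) = wperm (j + 1)"
      using mtop True mtop_sym_perm[of 2] wperm_eblock[of 3] by simp
    then show ?thesis using l True unfolding top_succ_def by simp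
  next
    case False
    have "marked True ((j - 1) + 1 + 1) (eblock 1 (fblock 1 (sym_perm (j - 1)))) (1 + 2)"
      using j False by (intro marked.marked_E1_F hyp.hyp_sym) auto
    then show ?thesis using mtop mtop_sym_perm[of j] l j False
      unfolding top_succ_def by (simp add: numeral_3_eq_3)
  qed
qed

lemma top_succ_eblock_fblock:
  assumes u: "hyp True j u" and j: "j \<ge> 2" and c: "c \<ge> 1"
  shows "top_succ True (j + c + 1) (eblock 1 (fblock c u)) (c + 2)"
proof -
  have lu: "length u = j" using u hyp_len by blast
  have mtop: "mtop (eblock 1 (fblock c u)) = eblock 1 (mtop (fblock c u))"
    using mtop_eblock[of "fblock c u" 1] lu j by simp
  have l: "last (eblock 1 (fblock c u)) = last (fblock c u) + 1"
    using last_eblock[of "fblock c u" 1] lu j by simp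
  show ?thesis
  proof (cases "u = sym_perm j")
    case u_sym: True
    have lF: "last (fblock c u) = 0" using u_sym last_fblock[of u c] last_sym_perm j by (simp add: sym_perm_def)
    show ?thesis
    proof (cases "j = 2")
      case True
      have "mtop (eblock 1 (fblock c u)) = wperm (j + c + 1)"
        using mtop True u_sym mtop_fblock_sym[of 2 c] wperm_eblock[of "c + 3"] by (simp add: numeral_3_eq_3)
      then show ?thesis using l lF True unfolding top_succ_def by simp
    next
      case False
      have "marked True ((j - 1) + (c + 1) + 1) (eblock 1 (fblock (c + 1) (sym_perm (j - 1)))) ((c + 1) + 2)"
        using j False by (intro marked.marked_E1_F hyp.hyp_sym) auto
      then show ?thesis using mtop u_sym mtop_fblock_sym[of j c] l lF j False unfolding top_succ_def by simp
    qed
  next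
    case False
    have lu0: "last u \<noteq> 0" using hyp_True_last[OF u False] .
    have mF: "mtop (fblock c u) = fblock c (mtop u)" using mtop_fblock lu j lu0 by simp
    have une: "u \<noteq> []" using lu j by auto
    have lF: "last (fblock c u) = last u + c" using last_fblock[OF une, of c] lu0 by simp
    have "hyp True j (mtop u)" using hyp_closed[OF u] False by simp
    then have "marked True (j + c + 1) (eblock 1 (fblock c (mtop u))) (c + 2)"
      using marked.marked_E1_F j c by simp
    then show ?thesis using mtop mF l lF lu0 j unfolding top_succ_def by auto
  qed
qed

lemma top_succ_fblock_sym:
  assumes j: "j \<ge> 3" and a: "a \<ge> 1"
  shows "top_succ False (j + a) (fblock a (sym_perm j)) (2 + a)"
proof -
  have lF: "last (fblock a (sym_perm j)) = 0"
    using last_fblock[of "sym_perm j" a] last_sym_perm j by (simp add: sym_perm_def)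
  have mtop: "mtop (fblock a (sym_perm j)) = fblock (a + 1) (sym_perm (j - 1))"
    using mtop_fblock_sym[of j a] j by simp
  show ?thesis
  proof (cases "j = 3")
    case True
    have "fblock (a + 1) (sym_perm (j - 1)) = fblock (a + 1) (wperm (j + a - (a + 1)))" using True wperm_2 by simp
    then show ?thesis using mtop lF True a unfolding top_succ_def by auto
  next
    case False
    have "marked False ((j - 1) + (a + 1)) (fblock (a + 1) (sym_perm (j - 1))) (2 + (a + 1))"
      using j False by (intro marked.marked_F marked.marked_sym) auto
    then show ?thesis using mtop lF j False a unfolding top_succ_def by auto
  qed
qed

lemma top_succ_fblock:
  assumes t: "hyp True j t" "t \<noteq> sym_perm j" and j: "j \<ge> 3" and a: "a \<ge> 1"
    and IH: "top_succ True j t h"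
  shows "top_succ False (j + a) (fblock a t) (h + a)"
proof -
  have lt: "length t = j" using t hyp_len by blast
  have lt0: "last t \<noteq> 0" using hyp_True_last[OF t] .
  have mtop: "mtop (fblock a t) = fblock a (mtop t)" using mtop_fblock lt j lt0 by simp
  have tne: "t \<noteq> []" using lt j by auto
  have lF: "last (fblock a t) = last t + a" using last_fblock[OF tne, of a] lt0 by simp
  show ?thesis
  proof (cases "h + (if last t < h then 1 else 0) < j")
    case True
    then have "marked True j (mtop t) (h + (if last t < h then 1 else 0))"
      using IH unfolding top_succ_def by auto
    then have "marked False (j + a) (fblock a (mtop t)) (h + (if last t < h then 1 else 0) + a)"
      using marked.marked_F a by blast
    then show ?thesis using True mtop lF unfolding top_succ_def by auto
  next
    case False
    then have "h + (if last t < h then 1 else 0) = j" "mtop t = wperm j" using IH unfolding top_succ_def by auto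
    then show ?thesis using mtop lF a j unfolding top_succ_def by auto
  qed
qed

lemma top_succ_fblock_sym2:
  assumes "a \<ge> 1"
  shows "top_succ False (a + 2) (fblock a (sym_perm 2)) 1"
proof -
  have mtop: "mtop (fblock a (sym_perm 2)) = sym_perm (a + 2)" using mtop_fblock_sym[of 2 a] by simp
  have "marked False (a + 2) (sym_perm (a + 2)) 2" using assms by (intro marked.marked_sym) auto
  then show ?thesis using last_u0 mtop assms unfolding top_succ_def by (auto simp: numeral_2_eq_2)
qed

lemma marked_mtop: "marked b k t h \<Longrightarrow> (b \<longrightarrow> t \<noteq> sym_perm k) \<Longrightarrow> top_succ b k t h"
proof (induction rule: marked.induct)
  case (marked_sym k b) then show ?case using top_succ_sym by simp
next
  case (marked_E2 j s a) then show ?case using top_succ_eblock by simp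
next
  case (marked_E1_sym j) then show ?case using top_succ_eblock_sym by simp
next
  case (marked_E1_F j u c) then show ?case using top_succ_eblock_fblock by simp
next
  case (marked_F j t h a)
  have t: "hyp True j t" "j \<ge> 3" using marked_basic[OF marked_F(1)] by auto
  show ?case
  proof (cases "t = sym_perm j")
    case True
    then have "h = 2" using marked_sym_marker marked_F(1) by blast
    then show ?thesis using top_succ_fblock_sym[OF t(2) marked_F(2)] True by (simp add: add.commute)
  next
    case False
    then show ?thesis using top_succ_fblock[OF t(1) False t(2) marked_F(2)] marked_F.IH by simp
  qed
next
  case (marked_F_sym a) then show ?case using top_succ_fblock_sym2 by simp
qed

lemma marked_mtop_any:
  assumes "marked b n t h"
  shows "\<exists>b'. top_succ b' n t h"
proof (cases "b \<longrightarrow> t \<noteq> sym_perm n")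
  case True then show ?thesis using marked_mtop[OF assms] by blast
next
  case False
  then have "marked False n t h"
    using assms marked_sym_marker[of b n h] marked.marked_sym marked_is_perm by auto
  then show ?thesis using marked_mtop by blast
qed

lemma top_succ_cases:
  assumes "top_succ b n t h" "n \<ge> 2"
  shows "(h + (if last t < h then 1 else 0) < n \<and> marked b n (mtop t) (h + (if last t < h then 1 else 0))) \<or>
         (h + (if last t < h then 1 else 0) = n \<and> mtop t \<in> wave n)"
  using assms wave_memI[of 0 n] wave_memI unfolding top_succ_def by (cases b) auto

lemma wave_exit: "n \<ge> 3 \<Longrightarrow> u \<in> wave n \<Longrightarrow> last u + 1 < n \<and> (\<exists>b. marked b n u (last u + 1))"
proof -
  assume n: "n \<ge> 3" and u: "u \<in> wave n"
  then obtain i where i: "i \<le> n - 2" "u = fblock i (wperm (n - i))" by (auto simp: wave_def)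
  show ?thesis
  proof (cases "i = 0")
    case True
    then have u': "u = eblock 1 (sym_perm (n - 1))" using i n wperm_eblock by simp
    have l: "last u = 1" using u' last_eblock[of "sym_perm (n - 1)" 1] last_sym_perm n by simp
    have "marked True ((n - 1) + 1) (eblock 1 (sym_perm (n - 1))) 2" using n by (intro marked.marked_E1_sym) auto
    then have mk2: "marked True n u 2" using u' n by simp
    have e: "last u + 1 = 2" using l by simp
    show ?thesis unfolding e using mk2 n by auto
  next
    case False
    show ?thesis
    proof (cases "i = n - 2")
      case True
      then have u': "u = fblock i (sym_perm 2)" using i n wperm_2 by (simp add: numeral_2_eq_2)
      have l: "last u = 0" using u' by (simp add: fblock_def fshift_def sym_perm_def numeral_2_eq_2)
      have "marked False (i + 2) (fblock i (sym_perm 2)) 1" using False by (intro marked.marked_F_sym) auto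
      moreover have "i + 2 = n" using True n by simp
      ultimately show ?thesis using u' l by auto
    next
      case ni: False
      define m where "m = n - i"
      have m: "m \<ge> 3" "n = m + i" using ni i m_def by auto
      have w: "wperm m = eblock 1 (sym_perm (m - 1))" using m wperm_eblock by simp
      have lw: "last (wperm m) = 1" using last_wperm m by simp
      have "marked True ((m - 1) + 1) (eblock 1 (sym_perm (m - 1))) 2" using m by (intro marked.marked_E1_sym) auto
      then have "marked True m (wperm m) 2" using w m by simp
      then have mkF: "marked False (m + i) (fblock i (wperm m)) (2 + i)" using False by (intro marked.marked_F) auto
      have u': "u = fblock i (wperm m)" using i m_def by simp
      have lF: "last (fblock i (wperm m)) = 1 + i" using last_fblock[of "wperm m" i] lw by (simp add: wperm_def)
      have e: "last u + 1 = 2 + i" using u' lF by simp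
      have mk': "marked False n u (2 + i)" using mkF u' m(2) by simp
      have lt: "2 + i < n" using m(1,2) by linarith
      show ?thesis unfolding e using mk' lt by blast
    qed
  qed
qed


section \<open>The orbit of the marked permutation\<close>

definition diagram :: "nat \<Rightarrow> nat list set" where
  "diagram n = {mark h t | t h. \<exists>b. marked b n t h} \<union> mark n ` cyc n"

lemma diagram_closed_cyc:
  assumes u: "u \<in> cyc n" and n: "n \<ge> 3"
  shows "mtop (mark n u) \<in> diagram n" "mbot (mark n u) \<in> diagram n"
proof -
  have pu: "is_perm n u" using cyc_is_perm n u by blast
  have "mbot (mark n u) = mark n (rotr u)" using mbot_mark_top[OF pu] n by simp
  then show "mbot (mark n u) \<in> diagram n" using cyc_rotr[OF n u] by (simp add: diagram_def)
  have mtx: "mtop (mark n u) = mark (last u + 1) u" using mtop_mark_top[OF pu] n by simp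
  show "mtop (mark n u) \<in> diagram n"
  proof (cases "u = zperm n")
    case True
    then have "mtop (mark n u) = mark n u" using mtx last_zperm n by simp
    then show ?thesis using u by (simp add: diagram_def)
  next
    case False
    then have "u \<in> wave n" using u by (simp add: cyc_def)
    then obtain b where "marked b n u (last u + 1)" using wave_exit n by blast
    then show ?thesis using mtx by (auto simp: diagram_def)
  qed
qed

lemma diagram_closed_marked:
  assumes th: "marked b n t h"
  shows "mtop (mark h t) \<in> diagram n" "mbot (mark h t) \<in> diagram n"
proof -
  have pt: "is_perm n t" "h < n" "n \<ge> 3" using marked_is_perm[OF th] by auto
  have "mbot (mark h t) = mark h (mbot t)" using mbot_mark[OF pt(1) _ pt(2)] pt by simp
  then show "mbot (mark h t) \<in> diagram n" using marked_mbot_any[OF th] by (auto simp: diagram_def)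
  define h' where "h' = h + (if last t < h then 1 else 0)"
  have mtx: "mtop (mark h t) = mark h' (mtop t)" using mtop_mark[OF pt(1) _ pt(2)] pt h'_def by simp
  obtain b' where "top_succ b' n t h" using marked_mtop_any[OF th] by blast
  then have "(h' < n \<and> marked b' n (mtop t) h') \<or> (h' = n \<and> mtop t \<in> wave n)"
    using top_succ_cases pt unfolding h'_def by simp
  then show "mtop (mark h t) \<in> diagram n" using mtx by (auto simp: diagram_def cyc_def)
qed

lemma diagram_closed:
  assumes "x \<in> diagram n" "n \<ge> 3"
  shows "mtop x \<in> diagram n \<and> mbot x \<in> diagram n"
proof -
  from assms(1) consider (marked) t h b where "x = mark h t" "marked b n t h"
    | (cycle) u where "u \<in> cyc n" "x = mark n u"
    by (auto simp: diagram_def)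
  then show ?thesis
  proof cases
    case marked then show ?thesis using diagram_closed_marked by simp
  next
    case cycle then show ?thesis using diagram_closed_cyc assms(2) by simp
  qed
qed

lemma marked_step_lift:
  assumes "marked b n t h" "t' = mtop t \<or> t' = mbot t"
  shows "\<exists>b' h'. marked b' n t' h' \<and> red_step\<^sup>*\<^sup>* (mark h t) (mark h' t')"
proof -
  have pt: "is_perm n t" "h < n" "n \<ge> 3" using marked_is_perm[OF assms(1)] by auto
  from assms(2) show ?thesis
  proof
    assume t': "t' = mbot t"
    have "mbot (mark h t) = mark h (mbot t)" using mbot_mark[OF pt(1) _ pt(2)] pt by simp
    moreover obtain b' where "marked b' n (mbot t) h" using marked_mbot_any[OF assms(1)] by blast
    ultimately show ?thesis using t' by (metis red_step_def r_into_rtranclp)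
  next
    assume t': "t' = mtop t"
    define h' where "h' = h + (if last t < h then 1 else 0)"
    have mtx: "mtop (mark h t) = mark h' (mtop t)" using mtop_mark[OF pt(1) _ pt(2)] pt h'_def by simp
    obtain b2 where "top_succ b2 n t h" using marked_mtop_any[OF assms(1)] by blast
    then have "(h' < n \<and> marked b2 n (mtop t) h') \<or> (h' = n \<and> mtop t \<in> wave n)"
      using top_succ_cases pt unfolding h'_def by simp
    then show ?thesis
    proof
      assume "h' < n \<and> marked b2 n (mtop t) h'"
      then show ?thesis using mtx t' by (metis red_step_def r_into_rtranclp)
    next
      assume c: "h' = n \<and> mtop t \<in> wave n"
      txt \<open>The mark became maximal; one more top move takes it back into the class.\<close>
      have pu: "is_perm n (mtop t)" using wave_is_perm c pt by blast
      obtain b' where mk': "marked b' n (mtop t) (last (mtop t) + 1)" using wave_exit c pt by blast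
      have "mtop (mark n (mtop t)) = mark (last (mtop t) + 1) (mtop t)" using mtop_mark_top[OF pu] pt by simp
      then have "red_step\<^sup>*\<^sup>* (mark h t) (mark (last (mtop t) + 1) (mtop t))"
        using mtx c by (metis red_step_def r_into_rtranclp rtranclp.rtrancl_into_rtrancl)
      then show ?thesis using mk' t' by blast
    qed
  qed
qed

text \<open>The reduced permutation of pi_n: the mark n on top of u0 = fblock (n-2) [1, 0].\<close>

definition sigma0 :: "nat \<Rightarrow> nat list" where "sigma0 n = mark n (fblock (n - 2) (sym_perm 2))"

text \<open>Everything reachable from u0 within the class occurs in the orbit of sigma0 with
some marker: the first top move of sigma0 yields mark 1 u0, and each further move
is lifted by marked_step_lift.\<close>

lemma reach_marked_from_u0:
  assumes "red_step\<^sup>*\<^sup>* (fblock (n - 2) (sym_perm 2)) t" "n \<ge> 3"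
  shows "\<exists>b h. marked b n t h \<and> red_step\<^sup>*\<^sup>* (sigma0 n) (mark h t)"
  using assms(1)
proof (induction rule: rtranclp_induct)
  case base
  have "marked False ((n - 2) + 2) (fblock (n - 2) (sym_perm 2)) 1" using assms(2) by (intro marked.marked_F_sym) auto
  moreover have "n - 2 + 2 = n" using assms(2) by arith
  ultimately have mk0: "marked False n (fblock (n - 2) (sym_perm 2)) 1" by simp
  have pu: "is_perm n (fblock (n - 2) (sym_perm 2))" using wave_is_perm u0_wave assms(2) by blast
  have "mtop (sigma0 n) = mark 1 (fblock (n - 2) (sym_perm 2))"
    using mtop_mark_top[OF pu] assms(2) last_u0 by (simp add: sigma0_def)
  then have "red_step\<^sup>*\<^sup>* (sigma0 n) (mark 1 (fblock (n - 2) (sym_perm 2)))" by (metis red_step_def r_into_rtranclp)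
  then show ?case using mk0 by blast
next
  case (step y z)
  then obtain b h where bh: "marked b n y h" "red_step\<^sup>*\<^sup>* (sigma0 n) (mark h y)" by blast
  have "z = mtop y \<or> z = mbot y" using step(2) by (simp add: red_step_def)
  then obtain b' h' where "marked b' n z h'" "red_step\<^sup>*\<^sup>* (mark h y) (mark h' z)" using marked_step_lift[OF bh(1)] by blast
  then show ?case using bh(2) by (meson rtranclp_trans)
qed

text \<open>One top move takes u0 to the root sym_perm n, so the whole class is reachable
from u0; by uniqueness of markers every pair (t, h) with h a marker of t occurs.\<close>

lemma marked_reachable:
  assumes "marked b n t h"
  shows "red_step\<^sup>*\<^sup>* (sigma0 n) (mark h t)"
proof -
  have n: "n \<ge> 3" and it: "hyp b n t" using marked_basic[OF assms] by auto
  have e: "n - 2 + 2 = n" using n by arith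
  have "mtop (fblock (n - 2) (sym_perm 2)) = sym_perm n" using mtop_fblock_sym[of 2 "n - 2"] e by simp
  then have "red_step (fblock (n - 2) (sym_perm 2)) (sym_perm n)" by (simp add: red_step_def)
  then have "red_step\<^sup>*\<^sup>* (fblock (n - 2) (sym_perm 2)) t" using hyp_reach[OF it] by (meson converse_rtranclp_into_rtranclp)
  then obtain b2 h2 where "marked b2 n t h2" "red_step\<^sup>*\<^sup>* (sigma0 n) (mark h2 t)" using reach_marked_from_u0 n by blast
  moreover have "h = h2" using marked_fun assms \<open>marked b2 n t h2\<close> by blast
  ultimately show ?thesis by simp
qed

text \<open>The bottom move runs through the whole rotation cycle, starting from sigma0.\<close>

lemma cyc_reachable:
  assumes "u \<in> cyc n" "n \<ge> 3"
  shows "red_step\<^sup>*\<^sup>* (sigma0 n) (mark n u)"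
proof -
  have pu0: "is_perm n (fblock (n - 2) (sym_perm 2))" using wave_is_perm u0_wave assms(2) by blast
  have e: "n - 2 + 2 = n" using assms(2) by arith
  have "mbot (sigma0 n) = mark n (zperm n)"
    using mbot_mark_top[OF pu0] assms(2) rotr_fblock_sym2[of "n - 2"] e by (simp add: sigma0_def)
  then have z: "red_step\<^sup>*\<^sup>* (sigma0 n) (mark n (zperm n))" by (metis red_step_def r_into_rtranclp)
  have "mbot (mark n (zperm n)) = mark n (wperm n)"
    using mbot_mark_top[OF is_perm_zperm] assms(2) rotr_zperm by simp
  then have w: "red_step\<^sup>*\<^sup>* (sigma0 n) (mark n (wperm n))" using z by (metis red_step_def rtranclp.rtrancl_into_rtrancl)
  have W: "i \<le> n - 2 \<Longrightarrow> red_step\<^sup>*\<^sup>* (sigma0 n) (mark n (fblock i (wperm (n - i))))" for i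
  proof (induction i)
    case 0 then show ?case using w by simp
  next
    case (Suc i)
    then have IH: "red_step\<^sup>*\<^sup>* (sigma0 n) (mark n (fblock i (wperm (n - i))))" by simp
    have "fblock i (wperm (n - i)) \<in> wave n" using Suc wave_memI[of i n] by simp
    then have pu: "is_perm n (fblock i (wperm (n - i)))" using wave_is_perm assms(2) by blast
    have "mbot (mark n (fblock i (wperm (n - i)))) = mark n (fblock (Suc i) (wperm (n - Suc i)))"
      using mbot_mark_top[OF pu] assms(2) rotr_fblock_wperm[of "n - i" i] Suc by simp
    then show ?case using IH by (metis red_step_def rtranclp.rtrancl_into_rtrancl)
  qed
  show ?thesis
  proof (cases "u = zperm n")
    case True then show ?thesis using z by simp
  next
    case False
    then obtain i where "i \<le> n - 2" "u = fblock i (wperm (n - i))" using assms(1) by (auto simp: cyc_def wave_def)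
    then show ?thesis using W by simp
  qed
qed

lemma orbit_sigma0:
  assumes "n \<ge> 3"
  shows "{\<tau>. red_step\<^sup>*\<^sup>* (sigma0 n) \<tau>} = diagram n"
proof (intro set_eqI iffI)
  fix x assume "x \<in> {\<tau>. red_step\<^sup>*\<^sup>* (sigma0 n) \<tau>}"
  then have "red_step\<^sup>*\<^sup>* (sigma0 n) x" by simp
  then show "x \<in> diagram n"
  proof (induction rule: rtranclp_induct)
    case base
    have "fblock (n - 2) (sym_perm 2) \<in> cyc n" using u0_wave assms by (simp add: cyc_def)
    then show ?case by (simp add: sigma0_def diagram_def)
  next
    case (step y z) then show ?case using diagram_closed[OF _ assms] by (auto simp: red_step_def)
  qed
next
  fix x assume "x \<in> diagram n"
  then show "x \<in> {\<tau>. red_step\<^sup>*\<^sup>* (sigma0 n) \<tau>}"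
    using marked_reachable cyc_reachable assms by (auto simp: diagram_def)
qed


text \<open>The pairs (t, h) with h a marker of t form the graph of a function on the
hyperelliptic class of sym_perm n, so there are 2^(n-1) - 1 of them.\<close>

definition marker_pairs :: "nat \<Rightarrow> (nat list \<times> nat) set" where
  "marker_pairs n = {(t, h). \<exists>b. marked b n t h}"

lemma fst_marker_pairs:
  assumes "n \<ge> 3" shows "fst ` marker_pairs n = hypP n \<union> hypQ n"
proof
  show "fst ` marker_pairs n \<subseteq> hypP n \<union> hypQ n"
  proof
    fix t assume "t \<in> fst ` marker_pairs n"
    then obtain h b where "marked b n t h" by (auto simp: marker_pairs_def)
    then have "hyp b n t" using marked_basic by blast
    then show "t \<in> hypP n \<union> hypQ n" using hypP_def hypQ_def by (metis (full_types) Un_iff mem_Collect_eq)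
  qed
  show "hypP n \<union> hypQ n \<subseteq> fst ` marker_pairs n"
  proof
    fix t assume "t \<in> hypP n \<union> hypQ n"
    then obtain b where "hyp b n t" by (auto simp: hypP_def hypQ_def)
    then obtain h where "marked b n t h" using marked_total assms by blast
    then show "t \<in> fst ` marker_pairs n" by (force simp: marker_pairs_def)
  qed
qed

lemma card_marker_pairs:
  assumes "n \<ge> 3"
  shows "finite (marker_pairs n) \<and> card (marker_pairs n) = 2 ^ (n - 1) - 1"
proof -
  have inj: "inj_on fst (marker_pairs n)" using marked_fun by (auto simp: inj_on_def marker_pairs_def)
  have "marker_pairs n \<subseteq> (hypP n \<union> hypQ n) \<times> {0..<n}"
    using fst_marker_pairs[OF assms] marked_is_perm by (force simp: marker_pairs_def)
  moreover have "finite (hypP n \<union> hypQ n)" using card_halves[of n] assms by simp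
  ultimately have "finite (marker_pairs n)" by (meson finite_SigmaI finite_atLeastLessThan finite_subset)
  then show ?thesis
    using card_image[OF inj] fst_marker_pairs[OF assms] card_hyp_class[of n] assms by simp
qed

lemma card_diagram: assumes "n \<ge> 3" shows "card (diagram n) = 2 ^ (n - 1) - 1 + n"
proof -
  let ?A = "(\<lambda>(t, h). mark h t) ` marker_pairs n"
  have A: "{mark h t | t h. \<exists>b. marked b n t h} = ?A" by (auto simp: marker_pairs_def)
  have inj: "inj_on (\<lambda>(t, h). mark h t) (marker_pairs n)" by (auto simp: inj_on_def dest: mark_inj)
  have cA: "card ?A = 2 ^ (n - 1) - 1" using card_image[OF inj] card_marker_pairs[OF assms] by simp
  have finA: "finite ?A" using card_marker_pairs[OF assms] by simp
  have cB: "card (mark n ` cyc n) = n"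
    using card_image[of "mark n" "cyc n"] card_cyc[OF assms] mark_inj by (auto simp: inj_on_def)
  have finB: "finite (mark n ` cyc n)" by (simp add: cyc_def wave_def)
  have disj: "?A \<inter> mark n ` cyc n = {}"
  proof -
    have "h \<noteq> n" if "(t, h) \<in> marker_pairs n" for t h
      using that marked_is_perm by (auto simp: marker_pairs_def)
    then show ?thesis using mark_inj by fastforce
  qed
  have "card (diagram n) = card ?A + card (mark n ` cyc n)"
    unfolding diagram_def A using card_Un_disjoint[OF finA finB disj] by simp
  then show ?thesis using cA cB by simp
qed


lemma pi_n_lperm: assumes "n \<ge> 3" shows "is_lperm {0..n} (pi_n n) \<and> fst (pi_n n) \<noteq> []"
proof -
  have s1: "set (0 # [2..<n] @ [1, n]) = {0..n}" using assms by auto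
  have d1: "distinct (0 # [2..<n] @ [1, n])" using assms by auto
  have s2: "set (rev [0..<n+1]) = {0..n}" by auto
  have d2: "distinct (rev [0..<n+1])" by simp
  show ?thesis using s1 s2 d1 d2 by (simp add: is_lperm_def pi_n_def)
qed

lemma pos_rev_upt: "a \<le> n \<Longrightarrow> pos a (rev [0..<Suc n]) = n - a"
proof -
  assume a: "a \<le> n"
  have "rev [0..<n+1] ! (n - a) = a" using a by (simp add: rev_nth del: upt_Suc)
  moreover have "n - a < length (rev [0..<n+1])" by simp
  moreover have "distinct (rev [0..<n+1])" by (simp del: upt_Suc)
  ultimately show ?thesis using pos_nth[of "rev [0..<n+1]" "n - a"] by (simp del: upt_Suc)
qed

lemma map_minus_upt: "map (\<lambda>a. n - a) [2..<n] = rev [1..<n-1]"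
proof (rule nth_equalityI)
  show "length (map (\<lambda>a. n - a) [2..<n]) = length (rev [1..<n-1])" by simp
next
  fix i assume "i < length (map (\<lambda>a. n - a) [2..<n])"
  then have i: "i < n - 2" by simp
  then show "map (\<lambda>a. n - a) [2..<n] ! i = rev [1..<n-1] ! i" by (simp add: rev_nth)
qed

lemma reduced_pi_n: assumes "n \<ge> 3" shows "reduced (pi_n n) = sigma0 n"
proof -
  have r: "reduced (pi_n n) = map (\<lambda>a. pos a (rev [0..<n+1])) (0 # [2..<n] @ [1, n])"
    by (simp add: reduced_def pi_n_def del: upt_Suc)
  have "reduced (pi_n n) = map (\<lambda>a. n - a) (0 # [2..<n] @ [1, n])"
    unfolding r using assms by (intro map_cong) (auto simp: pos_rev_upt simp del: upt_Suc)
  also have "\<dots> = n # rev [1..<n-1] @ [n - 1, 0]" using map_minus_upt by simp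
  also have "\<dots> = sigma0 n"
  proof -
    have pu: "is_perm n (fblock (n - 2) (sym_perm 2))" using wave_is_perm u0_wave assms by blast
    have e: "n - 2 + 1 = n - 1" using assms by arith
    have "fblock (n - 2) (sym_perm 2) = rev [1..<n-1] @ [n - 1, 0]"
      using e assms by (simp add: fblock_def sym_perm_def fshift_def numeral_2_eq_2)
    then show ?thesis using mark_top[OF pu] by (simp add: sigma0_def)
  qed
  finally show ?thesis .
qed

theorem corollary3p2:
  fixes n :: nat
  assumes "n \<ge> 3"
  shows "card (reduced_rauzy_vertices (pi_n n)) = 2 ^ (n - 1) - 1 + n"
proof -
  have lperm: "is_lperm {0..n} (pi_n n)" "fst (pi_n n) \<noteq> []" using pi_n_lperm[OF assms] by auto
  have "reduced_rauzy_vertices (pi_n n) = {\<tau>. red_step\<^sup>*\<^sup>* (sigma0 n) \<tau>}"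
    using reduced_rauzy_vertices_eq[OF lperm] reduced_pi_n[OF assms] by simp
  also have "\<dots> = diagram n" using orbit_sigma0[OF assms] .
  finally show ?thesis using card_diagram[OF assms] by simp
qed

end
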